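(* Let $W=e^{-q}$ be the bivariate Freud weight and $\{\mathbb{P}_n\}$ an orthonormal polynomial system for it, with matrices $G^n_k$, $G_n$, $A_{n,i}$, $A_{n,i}^{-1}$, $B_{n,i}$, $C_{n,i}$ as in the context. Then for $i=1,2$: (i) $B_{n,i}=A_{n-1,i}^{-1}G_{n-1}N_{n,i}G_{n-1}^{-1}$ for $n\geqslant1$; (ii) $C_{n,i}^T=A_{n-3,i}A_{n-2,i}A_{n-1,i}G_nK_{n,i}G_n^{-1}$ for $n\geqslant3$; (iii) $C_{n,i}=G^n_{n-2}G_{n-2}^{-1}B_{n-2,i}-B_{n,i}G^{n-1}_{n-3}G_{n-3}^{-1}$ for $n\geqslant3$. Moreover, for $k=0,1,\dots,\lfloor n/2\rfloor$, $$A_{n,i}G^{n+1}_{n-2k+1}+A_{n-1,i}^TG^{n-1}_{n-2k+1}=G^n_{n-2k}L_{n-2k,i}$$ and $$B_{n,i}G^{n-1}_{n-2k-1}+C_{n,i}G^{n-3}_{n-2k-1}=G^n_{n-2k}L_{n-2k-1,i}^TN_{n-2k,i}.$$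
   Context: Parameters $a_{4,0},a_{2,2},a_{0,4}\geqslant0$, $a_{2,0},a_{0,2}\in\mathbb{R}$, $a_{4,0}+a_{2,2}>0$, $a_{2,2}+a_{0,4}>0$; $q(x,y)=a_{4,0}x^4+a_{2,2}x^2y^2+a_{0,4}y^4+a_{2,0}x^2+a_{0,2}y^2$, $W=e^{-q}$, inner product $(f,g)=\iint_{\mathbb{R}^2}fgW\,dx\,dy$ (entrywise on vectors). $\mathbb{X}_n=(x^n,x^{n-1}y,\dots,y^n)^T$. An orthonormal polynomial system: column vectors $\mathbb{P}_n=(P_{n,0},\dots,P_{n,n})^T$ of linearly independent polynomials of exact total degree $n$ with $(\mathbb{P}_n,\mathbb{P}_m^T)=\delta_{nm}I_{n+1}$. Write $\mathbb{P}_n=\sum_{k}G^n_k\mathbb{X}_k$ with constant $(n+1)\times(k+1)$ matrices $G^n_k$, $G_n:=G^n_n$ invertible, and the convention $G^n_m=0$ for $m>n$ or $m<0$ (also $G^n_k=0$ when $n-k$ is odd, by central symmetry). $A_{n,i}$ ($(n+1)\times(n+2)$) are defined by $x\mathbb{P}_n=A_{n,1}\mathbb{P}_{n+1}+A_{n-1,1}^T\mathbb{P}_{n-1}$, $y\mathbb{P}_n=A_{n,2}\mathbb{P}_{n+1}+A_{n-1,2}^T\mathbb{P}_{n-1}$ ($\mathbb{P}_{-1}=0$); $A_{n,i}^{-1}:=G_{n+1}L_{n,i}^TG_n^{-1}$ denotes the right pseudo inverse of $A_{n,i}$. $B_{n,i}$ ($(n+1)\times n$) and $C_{n,i}$ ($(n+1)\times(n-2)$,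 zero for $n\leqslant2$) are the matrices in the structure relations $\partial_x\mathbb{P}_n=B_{n,1}\mathbb{P}_{n-1}+C_{n,1}\mathbb{P}_{n-3}$, $\partial_y\mathbb{P}_n=B_{n,2}\mathbb{P}_{n-1}+C_{n,2}\mathbb{P}_{n-3}$ ($n\geqslant1$), which hold for this weight. $L_{n,1}=(I_{n+1}\,|\,0)$, $L_{n,2}=(0\,|\,I_{n+1})$. $N_{n,1}=\mathrm{diag}(n,\dots,1)$, $N_{n,2}=\mathrm{diag}(1,\dots,n)$. $K_{n,1}$: $(n+1)\times(n+1)$ upper triangular, diagonal $4a_{4,0}$, entries $(j,j+2)$ equal $2a_{2,2}$, others $0$; $K_{n,2}$: lower triangular, diagonal $4a_{0,4}$, entries $(j+2,j)$ equal $2a_{2,2}$, others $0$. *)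

theory Defs
  imports "HOL-Analysis.Analysis" "Jordan_Normal_Form.Matrix"
begin

definition minv :: "real mat \<Rightarrow> real mat" where
  "minv A = (SOME B. B \<in> carrier_mat (dim_row A) (dim_row A) \<and>
                     A * B = 1\<^sub>m (dim_row A) \<and> B * A = 1\<^sub>m (dim_row A))"

definition freud_q :: "real \<Rightarrow> real \<Rightarrow> real \<Rightarrow> real \<Rightarrow> real \<Rightarrow> real \<Rightarrow> real \<Rightarrow> real" where
  "freud_q a40 a22 a04 a20 a02 x y =
     a40 * x^4 + a22 * x^2 * y^2 + a04 * y^4 + a20 * x^2 + a02 * y^2"

definition freud_W :: "real \<Rightarrow> real \<Rightarrow> real \<Rightarrow> real \<Rightarrow> real \<Rightarrow> real \<Rightarrow> real \<Rightarrow> real" where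
  "freud_W a40 a22 a04 a20 a02 x y = exp (- freud_q a40 a22 a04 a20 a02 x y)"

text \<open>Coefficient matrices G n k = G^n_k ((n+1) x (k+1)), extended to integer indices with
  the convention G^n_m = 0 for m > n or m < 0 (or n < 0); the zero matrix then has
  dimensions (n+1) x (m+1), truncated at 0.\<close>
definition Gz :: "(nat \<Rightarrow> nat \<Rightarrow> real mat) \<Rightarrow> int \<Rightarrow> int \<Rightarrow> real mat" where
  "Gz G n k = (if 0 \<le> k \<and> k \<le> n then G (nat n) (nat k)
               else 0\<^sub>m (nat (n + 1)) (nat (k + 1)))"

text \<open>The j-th entry of \<P>_n at (x,y):  sum_{k<=n} (G^n_k X_k)_j,
  where X_k = (x^k, x^(k-1) y, ..., y^k).\<close>
definition Pent :: "(nat \<Rightarrow> nat \<Rightarrow> real mat) \<Rightarrow> nat \<Rightarrow> nat \<Rightarrow> real \<Rightarrow> real \<Rightarrow> real" where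
  "Pent G n j x y = (\<Sum>k\<le>n. \<Sum>l\<le>k. G n k $$ (j, l) * x ^ (k - l) * y ^ l)"

definition Pz :: "(nat \<Rightarrow> nat \<Rightarrow> real mat) \<Rightarrow> int \<Rightarrow> real \<Rightarrow> real \<Rightarrow> real vec" where
  "Pz G n x y = (if n < 0 then vec 0 (\<lambda>_. 0) else vec (nat n + 1) (\<lambda>j. Pent G (nat n) j x y))"

definition Az :: "(nat \<Rightarrow> nat \<Rightarrow> real mat) \<Rightarrow> nat \<Rightarrow> int \<Rightarrow> real mat" where
  "Az A i n = (if n < 0 then 0\<^sub>m (nat (n + 1)) (nat (n + 2)) else A i (nat n))"

definition Lm :: "nat \<Rightarrow> int \<Rightarrow> real mat" where
  "Lm i n = mat (nat (n + 1)) (nat (n + 2))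
     (\<lambda>(r, c). if (i = 1 \<and> c = r) \<or> (i = 2 \<and> c = r + 1) then 1 else 0)"

definition Nm :: "nat \<Rightarrow> nat \<Rightarrow> real mat" where
  "Nm i n = mat n n (\<lambda>(r, c). if r = c then (if i = 1 then real (n - r) else real (r + 1)) else 0)"

definition Km :: "real \<Rightarrow> real \<Rightarrow> real \<Rightarrow> nat \<Rightarrow> nat \<Rightarrow> real mat" where
  "Km a40 a22 a04 i n = mat (n + 1) (n + 1) (\<lambda>(r, c).
     if i = 1 then (if c = r then 4 * a40 else if c = r + 2 then 2 * a22 else 0)
     else (if r = c then 4 * a04 else if r = c + 2 then 2 * a22 else 0))"

text \<open>Right pseudo inverse A_{n,i}^{-1} := G_{n+1} L_{n,i}^T G_n^{-1}.\<close>
definition Ainv :: "(nat \<Rightarrow> nat \<Rightarrow> real mat) \<Rightarrow> nat \<Rightarrow> nat \<Rightarrow> real mat" where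
  "Ainv G i n = G (n + 1) (n + 1) * transpose_mat (Lm i (int n)) * minv (G n n)"

definition pdx :: "(real \<Rightarrow> real \<Rightarrow> real) \<Rightarrow> real \<Rightarrow> real \<Rightarrow> real" where
  "pdx f x y = deriv (\<lambda>t. f t y) x"
definition pdy :: "(real \<Rightarrow> real \<Rightarrow> real) \<Rightarrow> real \<Rightarrow> real \<Rightarrow> real" where
  "pdy f x y = deriv (\<lambda>t. f x t) y"

definition ip :: "(real \<Rightarrow> real \<Rightarrow> real) \<Rightarrow> (real \<Rightarrow> real \<Rightarrow> real) \<Rightarrow> (real \<Rightarrow> real \<Rightarrow> real) \<Rightarrow> real" where
  "ip W f g = integral\<^sup>L (lborel :: (real \<times> real) measure) (\<lambda>(x, y). f x y * g x y * W x y)"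

end

theory Submission
  imports Defs
begin

text \<open>Write each \<open>P\<^sub>n\<^sub>,\<^sub>j\<close> as the array of its coefficients in the monomial basis.
  Comparing homogeneous parts in the three-term relation \<open>x\<^sub>i \<P>\<^sub>n = A\<^sub>n\<^sub>,\<^sub>i \<P>\<^sub>n\<^sub>+\<^sub>1 + A\<^sup>T\<^sub>n\<^sub>-\<^sub>1\<^sub>,\<^sub>i \<P>\<^sub>n\<^sub>-\<^sub>1\<close>
  and in the structure relation \<open>\<partial>\<^sub>i \<P>\<^sub>n = B\<^sub>n\<^sub>,\<^sub>i \<P>\<^sub>n\<^sub>-\<^sub>1 + C\<^sub>n\<^sub>,\<^sub>i \<P>\<^sub>n\<^sub>-\<^sub>3\<close> gives the two families of
  coefficient identities.  Their leading parts are \<open>A\<^sub>n\<^sub>,\<^sub>i G\<^sub>n\<^sub>+\<^sub>1 = G\<^sub>n L\<^sub>n\<^sub>,\<^sub>i\<close> and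
  \<open>B\<^sub>n\<^sub>,\<^sub>i G\<^sub>n\<^sub>-\<^sub>1 = G\<^sub>n L\<^sup>T\<^sub>n\<^sub>-\<^sub>1\<^sub>,\<^sub>i N\<^sub>n\<^sub>,\<^sub>i\<close>, which give (i); the structure relation in degree \<open>n - 3\<close>,
  combined with the leading identity for \<open>n - 2\<close>, gives (iii).

  For (ii), orthonormality gives \<open>C\<^sub>n\<^sub>,\<^sub>i = (\<partial>\<^sub>i \<P>\<^sub>n, \<P>\<^sup>T\<^sub>n\<^sub>-\<^sub>3)\<close>.  Integration by parts against
  \<open>W = e\<^sup>-\<^sup>q\<close>, done monomial by monomial on the moments, turns this into \<open>(\<P>\<^sub>n, \<P>\<^sup>T\<^sub>n\<^sub>-\<^sub>3 \<partial>\<^sub>i q)\<close>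
  up to terms of degree below \<open>n\<close>, which vanish.  Only the quartic part of \<open>q\<close> survives, and
  the moments \<open>(P\<^sub>n\<^sub>,\<^sub>j, x\<^sup>a y\<^sup>b)\<close> with \<open>a + b = n\<close> are the entries of \<open>G\<^sub>n\<^sup>-\<^sup>1\<close>; this produces
  \<open>K\<^sub>n\<^sub>,\<^sub>i G\<^sub>n\<^sup>-\<^sup>1\<close>, and \<open>A\<^sub>n\<^sub>-\<^sub>3\<^sub>,\<^sub>i A\<^sub>n\<^sub>-\<^sub>2\<^sub>,\<^sub>i A\<^sub>n\<^sub>-\<^sub>1\<^sub>,\<^sub>i G\<^sub>n = G\<^sub>n\<^sub>-\<^sub>3 L\<^sub>n\<^sub>-\<^sub>3\<^sub>,\<^sub>i L\<^sub>n\<^sub>-\<^sub>2\<^sub>,\<^sub>i L\<^sub>n\<^sub>-\<^sub>1\<^sub>,\<^sub>i\<close> selects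
  the rows that occur.\<close>


section \<open>Integration by parts\<close>

lemma integrable_tendsto_at_top_eq_0:
  fixes F :: "real \<Rightarrow> real"
  assumes F: "integrable lborel F" and lim: "(F \<longlongrightarrow> L) at_top"
  shows "L = 0"
proof (rule ccontr)
  assume L: "L \<noteq> 0"
  have "((\<lambda>x. \<bar>F x\<bar>) \<longlongrightarrow> \<bar>L\<bar>) at_top" using lim by (rule tendsto_rabs)
  then have "eventually (\<lambda>x. \<bar>L\<bar> / 2 < \<bar>F x\<bar>) at_top" by (rule order_tendstoD) (use L in simp)
  then obtain M where M: "\<And>x. x \<ge> M \<Longrightarrow> \<bar>L\<bar> / 2 < \<bar>F x\<bar>"
    by (auto simp: eventually_at_top_linorder)
  define T where "T = 2 * (\<bar>integral\<^sup>L lborel (\<lambda>x. \<bar>F x\<bar>)\<bar> + 1) / \<bar>L\<bar>"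
  have T: "T \<ge> 0" using L by (simp add: T_def)
  \<comment> \<open>\<open>\<bar>F\<bar>\<close> exceeds \<open>\<bar>L\<bar>/2\<close> on intervals \<open>[M, M + T]\<close> of arbitrary length.\<close>
  have "T * (\<bar>L\<bar> / 2) = integral\<^sup>L lborel (\<lambda>x. indicator {M..M + T} x * (\<bar>L\<bar> / 2))"
    using T by (simp add: measure_lborel_Icc)
  also have "\<dots> \<le> integral\<^sup>L lborel (\<lambda>x. \<bar>F x\<bar>)"
  proof (rule integral_mono)
    show "integrable lborel (\<lambda>x. indicator {M..M + T} x * (\<bar>L\<bar> / 2))"
      by (intro integrable_mult_left) (simp add: integrable_indicator_iff emeasure_lborel_Icc_eq)
    show "indicator {M..M + T} x * (\<bar>L\<bar> / 2) \<le> \<bar>F x\<bar>" for x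
      using M[of x] by (auto split: split_indicator)
  qed (use F in auto)
  finally show False using L by (simp add: T_def)
qed

lemma integrable_tendsto_at_bot_eq_0:
  fixes F :: "real \<Rightarrow> real"
  assumes "integrable lborel F" and "(F \<longlongrightarrow> L) at_bot"
  shows "L = 0"
proof (rule integrable_tendsto_at_top_eq_0)
  show "integrable lborel (\<lambda>x. F (- x))"
    using lborel_integrable_real_affine_iff[of "- 1" F 0] assms(1) by simp
  show "((\<lambda>x. F (- x)) \<longlongrightarrow> L) at_top"
    using assms(2) by (simp add: filterlim_at_bot_mirror)
qed

lemma integrable_antiderivative_limits:
  fixes F f :: "real \<Rightarrow> real"
  assumes FTC: "\<And>a b. a \<le> b \<Longrightarrow> set_lebesgue_integral lborel {a..b} f = F b - F a"
    and F: "integrable lborel F" and f: "integrable lborel f"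
  shows "set_lebesgue_integral lborel {0..} f = - F 0" and "set_lebesgue_integral lborel {..0} f = F 0"
proof -
  have f_on: "set_integrable lborel A f" if "A \<in> sets lborel" for A
    unfolding set_integrable_def using integrable_mult_indicator[OF that f] .
  \<comment> \<open>\<open>F\<close> has limits at \<open>\<plusminus>\<infinity>\<close> because \<open>f\<close> is integrable; they vanish because
      \<open>F\<close> is integrable.\<close>
  have "((\<lambda>b. F 0 + set_lebesgue_integral lborel {0..b} f)
          \<longlongrightarrow> F 0 + set_lebesgue_integral lborel {0..} f) at_top"
    by (intro tendsto_add tendsto_const tendsto_set_lebesgue_integral_at_top) (auto intro: f_on)
  moreover have ev_top: "eventually (\<lambda>b. F 0 + set_lebesgue_integral lborel {0..b} f = F b) at_top"
    using eventually_ge_at_top[of "0::real"] by eventually_elim (simp add: FTC)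
  ultimately have "(F \<longlongrightarrow> F 0 + set_lebesgue_integral lborel {0..} f) at_top"
    using tendsto_cong[OF ev_top] by simp
  then have "F 0 + set_lebesgue_integral lborel {0..} f = 0"
    by (rule integrable_tendsto_at_top_eq_0[OF F])
  then show "set_lebesgue_integral lborel {0..} f = - F 0" by simp
  have "((\<lambda>a. F 0 - set_lebesgue_integral lborel {a..0} f)
          \<longlongrightarrow> F 0 - set_lebesgue_integral lborel {..0} f) at_bot"
    by (intro tendsto_diff tendsto_const tendsto_set_lebesgue_integral_at_bot) (auto intro: f_on)
  moreover have ev_bot: "eventually (\<lambda>a. F 0 - set_lebesgue_integral lborel {a..0} f = F a) at_bot"
    using eventually_le_at_bot[of "0::real"] by eventually_elim (simp add: FTC)
  ultimately have "(F \<longlongrightarrow> F 0 - set_lebesgue_integral lborel {..0} f) at_bot"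
    using tendsto_cong[OF ev_bot] by simp
  then have "F 0 - set_lebesgue_integral lborel {..0} f = 0"
    by (rule integrable_tendsto_at_bot_eq_0[OF F])
  then show "set_lebesgue_integral lborel {..0} f = F 0" by simp
qed

lemma integral_has_real_derivative_eq_0:
  fixes F f :: "real \<Rightarrow> real"
  assumes deriv: "\<And>x. (F has_real_derivative f x) (at x)"
    and cont: "continuous_on UNIV f"
    and F: "integrable lborel F" and f: "integrable lborel f"
  shows "integral\<^sup>L lborel f = 0"
proof -
  have FTC: "set_lebesgue_integral lborel {a..b} f = F b - F a" if "a \<le> b" for a b
    unfolding set_lebesgue_integral_def
  proof (rule integral_FTC_atLeastAtMost[OF that])
    show "(F has_vector_derivative f x) (at x within {a..b})" for x
      using deriv[of x] unfolding has_real_derivative_iff_has_vector_derivative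
      by (rule has_vector_derivative_at_within)
    show "continuous_on {a..b} f" using cont by (rule continuous_on_subset) auto
  qed
  have f_on: "set_integrable lborel A f" if "A \<in> sets lborel" for A
    unfolding set_integrable_def using integrable_mult_indicator[OF that f] .
  have "{..0::real} \<union> {0..} = UNIV" by auto
  then have "integral\<^sup>L lborel f = set_lebesgue_integral lborel ({..0} \<union> {0..}) f"
    by (simp add: set_lebesgue_integral_def)
  also have "\<dots> = set_lebesgue_integral lborel {..0} f + set_lebesgue_integral lborel {0..} f"
    by (rule set_integral_Un_AE) (use AE_lborel_singleton[of 0] f_on in auto)
  also have "\<dots> = 0" using integrable_antiderivative_limits[OF FTC F f] by simp
  finally show ?thesis .
qed

lemma integral_partial_x_eq_0:
  fixes F g :: "real \<Rightarrow> real \<Rightarrow> real"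
  assumes g: "integrable lborel (\<lambda>(x, y). g x y)" and F: "integrable lborel (\<lambda>(x, y). F x y)"
    and deriv: "\<And>x y. ((\<lambda>t. F t y) has_real_derivative g x y) (at x)"
    and cont: "\<And>y. continuous_on UNIV (\<lambda>x. g x y)"
  shows "(\<integral>(x, y). g x y \<partial>lborel) = 0"
proof -
  have g': "integrable (lborel \<Otimes>\<^sub>M lborel) (\<lambda>(x, y). g x y)"
    and F': "integrable (lborel \<Otimes>\<^sub>M lborel) (\<lambda>(x, y). F x y)"
    using g F by (simp_all add: lborel_prod)
  have "AE y in lborel. integral\<^sup>L lborel (\<lambda>x. g x y) = 0"
    using lborel_pair.AE_integrable_snd[OF g'] lborel_pair.AE_integrable_snd[OF F']
  proof eventually_elim
    case (elim y)
    then show ?case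
      by (intro integral_has_real_derivative_eq_0[where F = "\<lambda>t. F t y"]) (use deriv cont in auto)
  qed
  then have "(\<integral>y. (\<integral>x. g x y \<partial>lborel) \<partial>lborel) = 0" by (rule integral_eq_zero_AE)
  then show ?thesis using lborel_pair.integral_snd[OF g'] by (simp add: lborel_prod)
qed

lemma integrable_swap_iff:
  fixes f :: "real \<Rightarrow> real \<Rightarrow> real"
  shows "integrable lborel (\<lambda>(x, y). f y x) \<longleftrightarrow> integrable lborel (\<lambda>(x, y). f x y)"
  using lborel_pair.integrable_product_swap_iff[of "\<lambda>(x, y). f x y"] by (simp add: lborel_prod)

lemma integral_swap:
  fixes f :: "real \<Rightarrow> real \<Rightarrow> real"
  assumes "integrable lborel (\<lambda>(x, y). f x y)"
  shows "(\<integral>(x, y). f y x \<partial>lborel) = (\<integral>(x, y). f x y \<partial>lborel)"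
  using lborel_pair.integral_product_swap[of "\<lambda>(x, y). f x y"] assms
  by (simp add: lborel_prod)

section \<open>Polynomials in two variables\<close>

definition monomial :: "nat \<Rightarrow> nat \<Rightarrow> real \<Rightarrow> real \<Rightarrow> real" where
  "monomial p r x y = x ^ p * y ^ r"

definition monomial_sum ::
    "'i set \<Rightarrow> ('i \<Rightarrow> real) \<Rightarrow> ('i \<Rightarrow> nat) \<Rightarrow> ('i \<Rightarrow> nat) \<Rightarrow> real \<Rightarrow> real \<Rightarrow> real" where
  "monomial_sum I u p r x y = (\<Sum>t\<in>I. u t * monomial (p t) (r t) x y)"

definition bipoly :: "nat \<Rightarrow> (nat \<Rightarrow> nat \<Rightarrow> real) \<Rightarrow> real \<Rightarrow> real \<Rightarrow> real" where
  "bipoly N c x y = (\<Sum>k\<le>N. \<Sum>l\<le>k. c k l * x ^ (k - l) * y ^ l)"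

lemma Pent_eq_bipoly: "Pent G n j = bipoly n (\<lambda>k l. G n k $$ (j, l))"
  by (simp add: Pent_def bipoly_def fun_eq_iff)

lemma monomial_sum_mult:
  "monomial_sum I u p r x y * monomial_sum J v p' r' x y
     = monomial_sum (I \<times> J) (\<lambda>(s, t). u s * v t) (\<lambda>(s, t). p s + p' t) (\<lambda>(s, t). r s + r' t) x y"
  unfolding monomial_sum_def monomial_def sum_product sum.cartesian_product
  by (intro sum.cong refl) (auto simp: power_add)

lemma bipoly_eq_monomial_sum:
  "bipoly N c = monomial_sum (SIGMA k:{..N}. {..k}) (\<lambda>(k, l). c k l) (\<lambda>(k, l). k - l) snd"
  unfolding bipoly_def monomial_sum_def monomial_def fun_eq_iff
  by (simp add: sum.Sigma case_prod_beta mult.assoc)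

lemma pdx_monomial_sum:
  assumes "finite I"
  shows "pdx (monomial_sum I u p r) x y
           = monomial_sum I (\<lambda>t. u t * real (p t)) (\<lambda>t. p t - 1) r x y"
proof -
  have "((\<lambda>s. monomial_sum I u p r s y)
          has_real_derivative monomial_sum I (\<lambda>t. u t * real (p t)) (\<lambda>t. p t - 1) r x y) (at x)"
    unfolding monomial_sum_def monomial_def using assms
    by (intro DERIV_sum) (auto intro!: derivative_eq_intros)
  then show ?thesis unfolding pdx_def by (rule DERIV_imp_deriv)
qed

lemma pdy_monomial_sum:
  assumes "finite I"
  shows "pdy (monomial_sum I u p r) x y
           = monomial_sum I (\<lambda>t. u t * real (r t)) p (\<lambda>t. r t - 1) x y"
proof -
  have "((\<lambda>s. monomial_sum I u p r x s)
          has_real_derivative monomial_sum I (\<lambda>t. u t * real (r t)) p (\<lambda>t. r t - 1) x y) (at y)"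
    unfolding monomial_sum_def monomial_def using assms
    by (intro DERIV_sum) (auto intro!: derivative_eq_intros)
  then show ?thesis unfolding pdy_def by (rule DERIV_imp_deriv)
qed

lemma bipoly_cong:
  "(\<And>k l. k \<le> N \<Longrightarrow> l \<le> k \<Longrightarrow> c k l = d k l) \<Longrightarrow> bipoly N c = bipoly N d"
  by (auto simp: bipoly_def fun_eq_iff intro!: sum.cong)

lemma bipoly_add: "bipoly N (\<lambda>k l. c k l + d k l) x y = bipoly N c x y + bipoly N d x y"
  by (simp add: bipoly_def algebra_simps sum.distrib)

lemma bipoly_sum:
  "finite I \<Longrightarrow> bipoly N (\<lambda>k l. \<Sum>t\<in>I. w t * c t k l) x y = (\<Sum>t\<in>I. w t * bipoly N (c t) x y)"
  by (simp add: bipoly_def sum_distrib_left sum_distrib_right sum.swap[of _ I] mult.assoc)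

lemma bipoly_extend:
  assumes "N \<le> M"
  shows "bipoly M (\<lambda>k l. if k \<le> N then c k l else 0) = bipoly N c"
proof -
  have "bipoly M (\<lambda>k l. if k \<le> N then c k l else 0) x y
      = (\<Sum>k\<le>N. \<Sum>l\<le>k. (if k \<le> N then c k l else 0) * x ^ (k - l) * y ^ l)" for x y
    unfolding bipoly_def using assms by (intro sum.mono_neutral_right) auto
  then show ?thesis by (simp add: bipoly_def fun_eq_iff)
qed

lemma bipoly_eq_0_imp_coeff_eq_0:
  assumes zero: "\<And>x y. bipoly N c x y = 0" and k: "k \<le> N" and l: "l \<le> k"
  shows "c k l = 0"
proof -
  \<comment> \<open>On the line \<open>(t x, t)\<close> the polynomial becomes a polynomial in \<open>t\<close> whose
      coefficient of \<open>t\<^sup>k\<close> is the homogeneous part of degree \<open>k\<close>, a polynomial in \<open>x\<close>.\<close>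
  define h where "h k x = (\<Sum>l\<le>k. c k l * x ^ (k - l))" for k x
  have "(\<Sum>k\<le>N. h k x * t ^ k) = bipoly N c (t * x) t" for x t
    unfolding bipoly_def h_def sum_distrib_right
  proof (intro sum.cong refl)
    fix k l assume "k \<in> {..N}" "l \<in> {..k}"
    then have "t ^ k = t ^ (k - l) * t ^ l" by (simp flip: power_add)
    then show "c k l * x ^ (k - l) * t ^ k = c k l * (t * x) ^ (k - l) * t ^ l"
      by (simp add: power_mult_distrib algebra_simps)
  qed
  then have "h k x = 0" for x
    using k zero polyfun_eq_0[of "\<lambda>k. h k x" N] by (simp add: mult.commute)
  moreover have "h k x = (\<Sum>i\<le>k. c k (k - i) * x ^ i)" for x
    unfolding h_def
      by (rule sum.reindex_bij_witness[where i = "\<lambda>i. k - i" and j = "\<lambda>l. k - l"]) auto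
  ultimately have "\<forall>i\<le>k. c k (k - i) = 0"
    using polyfun_eq_0[of "\<lambda>i. c k (k - i)" k] by auto
  then show ?thesis using l by (metis diff_diff_cancel diff_le_self)
qed

lemma bipoly_coeff_unique:
  assumes "\<And>x y. bipoly N c x y = bipoly N d x y" "k \<le> N" "l \<le> k"
  shows "c k l = d k l"
  using bipoly_eq_0_imp_coeff_eq_0[of N "\<lambda>k l. c k l - d k l" k l] assms
  by (simp add: bipoly_def algebra_simps sum_subtractf)

definition coord :: "nat \<Rightarrow> real \<Rightarrow> real \<Rightarrow> real" where
  "coord i x y = (if i = 1 then x else y)"

definition partial :: "nat \<Rightarrow> (real \<Rightarrow> real \<Rightarrow> real) \<Rightarrow> real \<Rightarrow> real \<Rightarrow> real" where
  "partial i f = (if i = 1 then pdx f else pdy f)"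

definition coord_mult_coeff :: "nat \<Rightarrow> (nat \<Rightarrow> nat \<Rightarrow> real) \<Rightarrow> nat \<Rightarrow> nat \<Rightarrow> real" where
  "coord_mult_coeff i c k l =
     (if i = 1 then (if l < k then c (k - 1) l else 0)
      else (if 0 < l \<and> l \<le> k then c (k - 1) (l - 1) else 0))"

definition partial_coeff :: "nat \<Rightarrow> (nat \<Rightarrow> nat \<Rightarrow> real) \<Rightarrow> nat \<Rightarrow> nat \<Rightarrow> real" where
  "partial_coeff i c k l =
     (if i = 1 then real (Suc k - l) * c (Suc k) l else real (Suc l) * c (Suc k) (Suc l))"

lemma coord_mult_bipoly: "coord i x y * bipoly N c x y = bipoly (Suc N) (coord_mult_coeff i c) x y"
proof -
  have "bipoly (Suc N) (coord_mult_coeff i c) x y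
      = (\<Sum>k\<le>N. \<Sum>l\<le>Suc k. coord_mult_coeff i c (Suc k) l * x ^ (Suc k - l) * y ^ l)"
    unfolding bipoly_def by (subst sum.atMost_Suc_shift) (simp add: coord_mult_coeff_def)
  also have "\<dots> = coord i x y * bipoly N c x y"
  proof (cases "i = 1")
    case True
    then have "(\<Sum>k\<le>N. \<Sum>l\<le>Suc k. coord_mult_coeff i c (Suc k) l * x ^ (Suc k - l) * y ^ l)
        = (\<Sum>k\<le>N. \<Sum>l\<le>k. c k l * x ^ (Suc k - l) * y ^ l)"
      by (intro sum.cong[OF refl]) (simp add: coord_mult_coeff_def)
    also have "\<dots> = coord i x y * bipoly N c x y"
      unfolding bipoly_def sum_distrib_left using True
      by (intro sum.cong refl) (simp add: coord_def Suc_diff_le)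
    finally show ?thesis .
  next
    case False
    then have "(\<Sum>k\<le>N. \<Sum>l\<le>Suc k. coord_mult_coeff i c (Suc k) l * x ^ (Suc k - l) * y ^ l)
        = (\<Sum>k\<le>N. \<Sum>l\<le>k. c k l * x ^ (k - l) * y ^ Suc l)"
      by (intro sum.cong[OF refl])
        (simp add: coord_mult_coeff_def sum.atMost_Suc_shift del: sum.atMost_Suc)
    also have "\<dots> = coord i x y * bipoly N c x y"
      unfolding bipoly_def sum_distrib_left using False by (simp add: coord_def mult_ac)
    finally show ?thesis .
  qed
  finally show ?thesis ..
qed

lemma partial_bipoly: "partial i (bipoly (Suc N) c) x y = bipoly N (partial_coeff i c) x y"
proof (cases "i = 1")
  case True
  have "((\<lambda>s. bipoly (Suc N) c s y) has_real_derivative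
      (\<Sum>k\<le>Suc N. \<Sum>l\<le>k. c k l * (real (k - l) * x ^ (k - l - 1)) * y ^ l)) (at x)"
    unfolding bipoly_def by (intro DERIV_sum) (auto intro!: derivative_eq_intros)
  then have "partial i (bipoly (Suc N) c) x y
      = (\<Sum>k\<le>Suc N. \<Sum>l\<le>k. c k l * (real (k - l) * x ^ (k - l - 1)) * y ^ l)"
    using True by (simp add: partial_def pdx_def DERIV_imp_deriv)
  also have "\<dots> = (\<Sum>k\<le>N. \<Sum>l\<le>Suc k. c (Suc k) l * (real (Suc k - l) * x ^ (Suc k - l - 1)) * y ^ l)"
    by (subst sum.atMost_Suc_shift) simp
  also have "\<dots> = bipoly N (partial_coeff i c) x y"
    unfolding bipoly_def using True
    by (intro sum.cong[OF refl]) (simp add: partial_coeff_def mult_ac)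
  finally show ?thesis .
next
  case False
  have "((\<lambda>s. bipoly (Suc N) c x s) has_real_derivative
      (\<Sum>k\<le>Suc N. \<Sum>l\<le>k. c k l * x ^ (k - l) * (real l * y ^ (l - 1)))) (at y)"
    unfolding bipoly_def by (intro DERIV_sum) (auto intro!: derivative_eq_intros)
  then have "partial i (bipoly (Suc N) c) x y
      = (\<Sum>k\<le>Suc N. \<Sum>l\<le>k. c k l * x ^ (k - l) * (real l * y ^ (l - 1)))"
    using False by (simp add: partial_def pdy_def DERIV_imp_deriv)
  also have "\<dots> = (\<Sum>k\<le>N. \<Sum>l\<le>k. c (Suc k) (Suc l) * x ^ (k - l) * (real (Suc l) * y ^ l))"
    by (simp add: sum.atMost_Suc_shift del: sum.atMost_Suc)
  also have "\<dots> = bipoly N (partial_coeff i c) x y"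
    unfolding bipoly_def using False by (intro sum.cong refl) (simp add: partial_coeff_def)
  finally show ?thesis .
qed

lemma partial_Pent:
  "1 \<le> n \<Longrightarrow> partial i (Pent G n j) = bipoly (n - 1) (partial_coeff i (\<lambda>k l. G n k $$ (j, l)))"
  using partial_bipoly[of i "n - 1" "\<lambda>k l. G n k $$ (j, l)"]
  by (simp add: Pent_eq_bipoly fun_eq_iff partial_def)

section \<open>Moments and the Freud weight\<close>

definition moment :: "(real \<Rightarrow> real \<Rightarrow> real) \<Rightarrow> nat \<Rightarrow> nat \<Rightarrow> real" where
  "moment W p r = (\<integral>(x, y). monomial p r x y * W x y \<partial>lborel)"

locale moment_weight =
  fixes W :: "real \<Rightarrow> real \<Rightarrow> real"
  assumes integrable_moment: "\<And>p r. integrable lborel (\<lambda>(x, y). monomial p r x y * W x y)"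
begin

lemma monomial_sum_weight_eq:
  "(\<lambda>(x, y). monomial_sum I u p r x y * W x y)
     = (\<lambda>z. \<Sum>t\<in>I. u t * (\<lambda>(x, y). monomial (p t) (r t) x y * W x y) z)"
  by (auto simp: monomial_sum_def sum_distrib_right mult.assoc)

lemma integrable_monomial_sum:
  assumes "finite I"
  shows "integrable lborel (\<lambda>(x, y). monomial_sum I u p r x y * W x y)"
  unfolding monomial_sum_weight_eq
  by (intro Bochner_Integration.integrable_sum integrable_mult_right integrable_moment)

lemma integral_monomial_sum:
  assumes "finite I"
  shows "(\<integral>(x, y). monomial_sum I u p r x y * W x y \<partial>lborel) = (\<Sum>t\<in>I. u t * moment W (p t) (r t))"
  unfolding monomial_sum_weight_eq moment_def
  by (subst Bochner_Integration.integral_sum) (auto intro: integrable_mult_right integrable_moment)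

lemma integrable_monomial_sum_mult:
  assumes "finite I" "finite J"
  shows "integrable lborel (\<lambda>(x, y). monomial_sum I u p r x y * monomial_sum J v p' r' x y * W x y)"
  unfolding monomial_sum_mult using assms by (intro integrable_monomial_sum) auto

lemma ip_monomial_sum:
  assumes "finite I" "finite J"
  shows "ip W (monomial_sum I u p r) (monomial_sum J v p' r')
           = (\<Sum>s\<in>I. \<Sum>t\<in>J. u s * v t * moment W (p s + p' t) (r s + r' t))"
  unfolding ip_def monomial_sum_mult using assms
  by (subst integral_monomial_sum) (simp_all add: sum.cartesian_product case_prod_beta)

lemma ip_monomial_sum_monomial:
  assumes "finite I"
  shows "ip W (monomial_sum I u p r) (monomial a b) = (\<Sum>t\<in>I. u t * moment W (p t + a) (r t + b))"
proof -
  have "monomial a b = monomial_sum {()} (\<lambda>_. 1) (\<lambda>_. a) (\<lambda>_. b)"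
    by (simp add: monomial_sum_def fun_eq_iff)
  then show ?thesis using assms by (simp add: ip_monomial_sum)
qed

lemma ip_monomial_sum_right:
  assumes "finite I" "finite J"
  shows "ip W (monomial_sum I u p r) (monomial_sum J v p' r')
           = (\<Sum>t\<in>J. v t * ip W (monomial_sum I u p r) (monomial (p' t) (r' t)))"
  unfolding ip_monomial_sum[OF assms] ip_monomial_sum_monomial[OF assms(1)] sum_distrib_left
  by (subst sum.swap) (simp add: mult_ac)

lemma ip_add_left:
  assumes "integrable lborel (\<lambda>(x, y). f x y * h x y * W x y)"
    and "integrable lborel (\<lambda>(x, y). g x y * h x y * W x y)"
  shows "ip W (\<lambda>x y. f x y + g x y) h = ip W f h + ip W g h"
  unfolding ip_def distrib_right case_prod_beta using assms[unfolded case_prod_beta]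
  by (rule Bochner_Integration.integral_add)

lemma ip_sum_left:
  assumes "finite C"
    and "\<And>c. c \<in> C \<Longrightarrow> integrable lborel (\<lambda>(x, y). f c x y * g x y * W x y)"
  shows "ip W (\<lambda>x y. \<Sum>c\<in>C. w c * f c x y) g = (\<Sum>c\<in>C. w c * ip W (f c) g)"
proof -
  have eq: "(\<lambda>(x, y). (\<Sum>c\<in>C. w c * f c x y) * g x y * W x y)
      = (\<lambda>z. \<Sum>c\<in>C. w c * (\<lambda>(x, y). f c x y * g x y * W x y) z)"
    by (auto simp: sum_distrib_right mult.assoc)
  show ?thesis unfolding ip_def eq using assms
    by (subst Bochner_Integration.integral_sum) (auto intro: integrable_mult_right)
qed

lemma integrable_bipoly_mult:
  "integrable lborel (\<lambda>(x, y). bipoly N c x y * bipoly M d x y * W x y)"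
  unfolding bipoly_eq_monomial_sum by (rule integrable_monomial_sum_mult) auto

lemma ip_bipoly_right:
  "ip W (bipoly N c) (bipoly M d) = (\<Sum>k\<le>M. \<Sum>l\<le>k. d k l * ip W (bipoly N c) (monomial (k - l) l))"
  unfolding bipoly_eq_monomial_sum
  by (simp add: ip_monomial_sum_right sum.Sigma case_prod_beta)

end

lemma freud_W_swap: "freud_W a40 a22 a04 a20 a02 y x = freud_W a04 a22 a40 a02 a20 x y"
  by (simp add: freud_W_def freud_q_def algebra_simps)

locale freud_weight = moment_weight "freud_W a40 a22 a04 a20 a02"
  for a40 a22 a04 a20 a02 :: real
begin

abbreviation W where "W \<equiv> freud_W a40 a22 a04 a20 a02"

lemma moment_ibp_x:
  "real a * moment W (a - 1) b
     = 4 * a40 * moment W (a + 3) b + 2 * a22 * moment W (a + 1) (b + 2) + 2 * a20 * moment W (a + 1) b"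
proof -
  \<comment> \<open>\<open>\<partial>\<^sub>x (x\<^sup>a y\<^sup>b W) = (a x\<^sup>a\<^sup>-\<^sup>1 y\<^sup>b - x\<^sup>a y\<^sup>b \<partial>\<^sub>x q) W\<close>, written as a sum of
      four monomials.\<close>
  define g where "g x y = monomial_sum {..<4::nat} ((!) [real a, - 4 * a40, - 2 * a22, - 2 * a20])
    ((!) [a - 1, a + 3, a + 1, a + 1]) ((!) [b, b, b + 2, b]) x y * W x y" for x y
  have deriv: "((\<lambda>s. monomial a b s y * W s y) has_real_derivative g x y) (at x)" for x y
  proof -
    have "((\<lambda>s. s ^ a * y ^ b * W s y) has_real_derivative real a * x ^ (a - 1) * y ^ b * W x y
        - x ^ a * y ^ b * W x y * (4 * a40 * x ^ 3 + 2 * a22 * x * y ^ 2 + 2 * a20 * x)) (at x)"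
      unfolding freud_W_def freud_q_def
      by (auto intro!: derivative_eq_intros simp: algebra_simps)
    moreover have "real a * x ^ (a - 1) * y ^ b * W x y
        - x ^ a * y ^ b * W x y * (4 * a40 * x ^ 3 + 2 * a22 * x * y ^ 2 + 2 * a20 * x) = g x y"
      by (simp add: g_def monomial_sum_def monomial_def eval_nat_numeral algebra_simps power_add)
    ultimately show ?thesis by (simp add: monomial_def)
  qed
  have "(\<integral>(x, y). g x y \<partial>lborel) = 0"
  proof (rule integral_partial_x_eq_0[OF _ _ deriv])
    show "integrable lborel (\<lambda>(x, y). g x y)"
      unfolding g_def by (rule integrable_monomial_sum) simp
    show "integrable lborel (\<lambda>(x, y). monomial a b x y * W x y)" by (rule integrable_moment)
    show "continuous_on UNIV (\<lambda>x. g x y)" for y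
      unfolding g_def monomial_sum_def monomial_def freud_W_def freud_q_def
      by (intro continuous_intros)
  qed
  moreover have "(\<integral>(x, y). g x y \<partial>lborel) = real a * moment W (a - 1) b
      - 4 * a40 * moment W (a + 3) b - 2 * a22 * moment W (a + 1) (b + 2) - 2 * a20 * moment W (a + 1) b"
    unfolding g_def by (subst integral_monomial_sum) (simp_all add: eval_nat_numeral)
  ultimately show ?thesis by simp
qed

lemma moment_ibp_y:
  "real b * moment W a (b - 1)
     = 4 * a04 * moment W a (b + 3) + 2 * a22 * moment W (a + 2) (b + 1) + 2 * a02 * moment W a (b + 1)"
proof -
  \<comment> \<open>Exchanging \<open>x\<close> and \<open>y\<close> turns \<open>W\<close> into the Freud weight with \<open>a\<^sub>4\<^sub>0, a\<^sub>0\<^sub>4\<close>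
      and \<open>a\<^sub>2\<^sub>0, a\<^sub>0\<^sub>2\<close> exchanged.\<close>
  let ?W' = "freud_W a04 a22 a40 a02 a20"
  have swap: "monomial p r y x * W y x = monomial r p x y * ?W' x y" for p r x y
    by (simp add: monomial_def freud_W_swap)
  interpret swapped: freud_weight a04 a22 a40 a02 a20
  proof
    fix p r
    have "integrable lborel (\<lambda>(x, y). monomial r p y x * W y x)"
      using integrable_swap_iff[of "\<lambda>x y. monomial r p x y * W x y"] integrable_moment by simp
    then show "integrable lborel (\<lambda>(x, y). monomial p r x y * ?W' x y)" unfolding swap .
  qed
  have "moment ?W' p r = moment W r p" for p r
  proof -
    have "moment ?W' p r = (\<integral>(x, y). monomial r p y x * W y x \<partial>lborel)"
      by (simp add: moment_def swap)
    also have "\<dots> = moment W r p"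
      unfolding moment_def by (rule integral_swap[of "\<lambda>x y. monomial r p x y * W x y"])
        (rule integrable_moment)
    finally show ?thesis .
  qed
  then show ?thesis using swapped.moment_ibp_x[of b a] by simp
qed

text \<open>The shifted forms are the ones met when a monomial \<open>x\<^sup>p y\<^sup>r\<close> of a polynomial is
  differentiated and tested against \<open>x\<^sup>a y\<^sup>b\<close>.\<close>

lemma moment_ibp_x_shifted:
  "real p * moment W (p - 1 + a) (r + b)
     = 4 * a40 * moment W (p + (a + 3)) (r + b) + 2 * a22 * moment W (p + (a + 1)) (r + (b + 2))
       + 2 * a20 * moment W (p + (a + 1)) (r + b) - real a * moment W (p + (a - 1)) (r + b)"
  using moment_ibp_x[of "p + a" "r + b"]
  by (cases "p = 0"; cases "a = 0") (simp_all add: algebra_simps)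

lemma moment_ibp_y_shifted:
  "real r * moment W (p + a) (r - 1 + b)
     = 4 * a04 * moment W (p + a) (r + (b + 3)) + 2 * a22 * moment W (p + (a + 2)) (r + (b + 1))
       + 2 * a02 * moment W (p + a) (r + (b + 1)) - real b * moment W (p + a) (r + (b - 1))"
  using moment_ibp_y[where a = "p + a" and b = "r + b"]
  by (cases "r = 0"; cases "b = 0") (simp_all add: algebra_simps)

end

lemma minv_mat:
  assumes inv: "invertible_mat M" and M: "M \<in> carrier_mat n n"
  shows "minv M \<in> carrier_mat n n" "M * minv M = 1\<^sub>m n" "minv M * M = 1\<^sub>m n"
proof -
  from inv obtain M' where MM': "M * M' = 1\<^sub>m (dim_row M)" and M'M: "M' * M = 1\<^sub>m (dim_row M')"
    unfolding invertible_mat_def inverts_mat_def by blast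
  have "M' \<in> carrier_mat n n"
    using arg_cong[OF MM', of dim_col] arg_cong[OF M'M, of dim_col] M by auto
  then have "\<exists>M'. M' \<in> carrier_mat (dim_row M) (dim_row M) \<and> M * M' = 1\<^sub>m (dim_row M)
      \<and> M' * M = 1\<^sub>m (dim_row M)"
    using MM' M'M M by auto
  then have "minv M \<in> carrier_mat (dim_row M) (dim_row M) \<and> M * minv M = 1\<^sub>m (dim_row M)
      \<and> minv M * M = 1\<^sub>m (dim_row M)"
    unfolding minv_def by (rule someI_ex)
  then show "minv M \<in> carrier_mat n n" "M * minv M = 1\<^sub>m n" "minv M * M = 1\<^sub>m n"
    using M by auto
qed

lemma mult_minv_cancel:
  assumes "invertible_mat M" "M \<in> carrier_mat n n" "X \<in> carrier_mat r n"
  shows "X * M * minv M = X"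
proof -
  note Mi = minv_mat[OF assms(1,2)]
  have "X * M * minv M = X * (M * minv M)" by (rule assoc_mult_mat[OF assms(3,2) Mi(1)])
  then show ?thesis using Mi(2) assms(3) by simp
qed

lemma minv_mult_cancel:
  assumes "invertible_mat M" "M \<in> carrier_mat n n" "X \<in> carrier_mat r n"
  shows "X * minv M * M = X"
proof -
  note Mi = minv_mat[OF assms(1,2)]
  have "X * minv M * M = X * (minv M * M)" by (rule assoc_mult_mat[OF assms(3) Mi(1) assms(2)])
  then show ?thesis using Mi(3) assms(3) by simp
qed

lemma mult_right_cancel_invertible:
  fixes M X Y :: "real mat"
  assumes "invertible_mat M" "M \<in> carrier_mat n n" "X \<in> carrier_mat r n" "Y \<in> carrier_mat r n"
    and "X * M = Y * M"
  shows "X = Y"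
  by (metis mult_minv_cancel[OF assms(1,2,3)] mult_minv_cancel[OF assms(1,2,4)] assms(5))

lemma minv_mult_vec_cancel:
  assumes "invertible_mat M" "M \<in> carrier_mat n n" "v \<in> carrier_vec n"
  shows "minv M *\<^sub>v (M *\<^sub>v v) = v"
proof -
  note Mi = minv_mat[OF assms(1,2)]
  have "minv M *\<^sub>v (M *\<^sub>v v) = (minv M * M) *\<^sub>v v"
    by (rule assoc_mult_mat_vec[OF Mi(1) assms(2,3), symmetric])
  then show ?thesis using Mi(3) assms(3) by simp
qed

lemma add_eq_imp_eq_minus_mat:
  fixes X Y Z :: "'a :: ab_group_add mat"
  assumes X: "X \<in> carrier_mat r k" and Y: "Y \<in> carrier_mat r k" and eq: "X + Y = Z"
  shows "Y = Z - X"
proof (rule eq_matI)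
  fix a b assume "a < dim_row (Z - X)" "b < dim_col (Z - X)"
  then have ab: "a < r" "b < k" using X by auto
  have "Z $$ (a, b) = X $$ (a, b) + Y $$ (a, b)" unfolding eq[symmetric] using ab Y by simp
  then show "Y $$ (a, b) = (Z - X) $$ (a, b)" using ab X by simp
qed (use X Y eq in auto)

lemma index_mult_mat_sum:
  "X \<in> carrier_mat r q \<Longrightarrow> Y \<in> carrier_mat q s \<Longrightarrow> j < r \<Longrightarrow> l < s \<Longrightarrow>
     (X * Y) $$ (j, l) = (\<Sum>c<q. X $$ (j, c) * Y $$ (c, l))"
  by (simp add: scalar_prod_def atLeast0LessThan)

lemma index_mult_mat_vec_sum:
  "M \<in> carrier_mat r d \<Longrightarrow> j < r \<Longrightarrow> (M *\<^sub>v vec d f) $ j = (\<Sum>c<d. M $$ (j, c) * f c)"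
  by (simp add: scalar_prod_def atLeast0LessThan)

lemma sum_two_deltas:
  fixes g :: "nat \<Rightarrow> real"
  assumes "r < N" "s < N" "r \<noteq> s"
  shows "(\<Sum>e<N. (if e = r then \<alpha> else if e = s then \<beta> else 0) * g e) = \<alpha> * g r + \<beta> * g s"
proof -
  have "(\<Sum>e<N. (if e = r then \<alpha> else if e = s then \<beta> else 0) * g e)
      = (\<Sum>e<N. (if e = r then \<alpha> * g e else 0) + (if e = s then \<beta> * g e else 0))"
    using assms(3) by (intro sum.cong) auto
  also have "\<dots> = \<alpha> * g r + \<beta> * g s" using assms by (simp add: sum.distrib)
  finally show ?thesis .
qed

lemma sum_atMost_last:
  fixes f :: "nat \<Rightarrow> 'a::comm_monoid_add"
  assumes "\<And>k. k < m \<Longrightarrow> f k = 0"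
  shows "(\<Sum>k\<le>m. f k) = f m"
proof -
  have "(\<Sum>k\<le>m. f k) = (\<Sum>k\<in>insert m {..<m}. f k)"
    by (simp add: lessThan_Suc_atMost[symmetric] lessThan_Suc)
  also have "\<dots> = f m" using assms by simp
  finally show ?thesis .
qed

lemma Lm_carrier: "Lm i (int a) \<in> carrier_mat (a + 1) (a + 2)"
  by (simp add: Lm_def nat_add_distrib)

lemma Lm_index:
  "b < a + 1 \<Longrightarrow> e < a + 2 \<Longrightarrow>
     Lm i (int a) $$ (b, e) = (if (i = 1 \<and> e = b) \<or> (i = 2 \<and> e = b + 1) then 1 else 0)"
  by (simp add: Lm_def nat_add_distrib)

lemma Lm_mult:
  assumes M: "M \<in> carrier_mat (a + 2) q" and i: "i \<in> {1, 2}"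
  shows "Lm i (int a) * M = mat (a + 1) q (\<lambda>(b, e). M $$ (b + (if i = 1 then 0 else 1), e))"
proof (rule eq_matI)
  fix b e assume "b < dim_row (mat (a + 1) q (\<lambda>(b, e). M $$ (b + (if i = 1 then 0 else 1), e)))"
    and "e < dim_col (mat (a + 1) q (\<lambda>(b, e). M $$ (b + (if i = 1 then 0 else 1), e)))"
  then have b: "b < a + 1" and e: "e < q" by auto
  have "(Lm i (int a) * M) $$ (b, e) = (\<Sum>d<a + 2. Lm i (int a) $$ (b, d) * M $$ (d, e))"
    using index_mult_mat_sum[OF Lm_carrier M b e] .
  also have "\<dots> = (\<Sum>d<a + 2. if d = b + (if i = 1 then 0 else 1) then M $$ (d, e) else 0)"
    using b i by (intro sum.cong) (auto simp: Lm_index)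
  finally show "(Lm i (int a) * M) $$ (b, e)
      = mat (a + 1) q (\<lambda>(b, e). M $$ (b + (if i = 1 then 0 else 1), e)) $$ (b, e)"
    using b e by simp
qed (use M Lm_carrier[of i a] in auto)

lemma Lm_product_mult:
  assumes M: "M \<in> carrier_mat (k + 4) q" and i: "i \<in> {1, 2}"
  shows "Lm i (int k) * (Lm i (int (k + 1)) * (Lm i (int (k + 2)) * M))
           = mat (k + 1) q (\<lambda>(b, e). M $$ (b + (if i = 1 then 0 else 3), e))"
proof -
  define s :: nat where "s = (if i = 1 then 0 else 1)"
  have "M \<in> carrier_mat (k + 2 + 2) q" using M by (simp add: eval_nat_numeral)
  from Lm_mult[OF this i] have "Lm i (int (k + 2)) * M = mat (k + 2 + 1) q (\<lambda>(b, e). M $$ (b + s, e))"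
    by (simp add: s_def)
  moreover have "Lm i (int (k + 1)) * mat (k + 2 + 1) q (\<lambda>(b, e). M $$ (b + s, e))
      = mat (k + 1 + 1) q (\<lambda>(b, e). M $$ (b + 2 * s, e))"
    using Lm_mult[of "mat (k + 2 + 1) q (\<lambda>(b, e). M $$ (b + s, e))" "k + 1" q i] i
    by (auto intro!: eq_matI simp: s_def)
  moreover have "Lm i (int k) * mat (k + 1 + 1) q (\<lambda>(b, e). M $$ (b + 2 * s, e))
      = mat (k + 1) q (\<lambda>(b, e). M $$ (b + 3 * s, e))"
    using Lm_mult[of "mat (k + 1 + 1) q (\<lambda>(b, e). M $$ (b + 2 * s, e))" k q i] i
    by (auto intro!: eq_matI simp: s_def eval_nat_numeral)
  ultimately show ?thesis by (simp add: s_def)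
qed

lemma mult_Lm_index:
  assumes M: "M \<in> carrier_mat r (a + 1)" and j: "j < r" and l: "l < a + 2" and i: "i \<in> {1, 2}"
  shows "(M * Lm i (int a)) $$ (j, l)
    = (if i = 1 then (if l \<le> a then M $$ (j, l) else 0) else (if 1 \<le> l then M $$ (j, l - 1) else 0))"
proof -
  have "(M * Lm i (int a)) $$ (j, l) = (\<Sum>d<a + 1. M $$ (j, d) * Lm i (int a) $$ (d, l))"
    using index_mult_mat_sum[OF M Lm_carrier j l] .
  also have "\<dots> = (\<Sum>d<a + 1.
      if d = (if i = 1 then l else l - 1) \<and> (i = 1 \<or> 1 \<le> l) then M $$ (j, d) else 0)"
    using l i by (intro sum.cong) (auto simp: Lm_index)
  also have "\<dots> = (if i = 1 then (if l \<le> a then M $$ (j, l) else 0)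
      else (if 1 \<le> l then M $$ (j, l - 1) else 0))"
    using l by (auto simp: sum.delta')
  finally show ?thesis .
qed

lemma mult_transpose_Lm_Nm_index:
  assumes M: "M \<in> carrier_mat r (a + 2)" and j: "j < r" and l: "l < a + 1" and i: "i \<in> {1, 2}"
  shows "(M * transpose_mat (Lm i (int a)) * Nm i (a + 1)) $$ (j, l)
    = (if i = 1 then real (a + 1 - l) * M $$ (j, l) else real (l + 1) * M $$ (j, l + 1))"
proof -
  have MLt: "M * transpose_mat (Lm i (int a)) \<in> carrier_mat r (a + 1)"
    using M Lm_carrier[of i a] by auto
  have MLt_index: "(M * transpose_mat (Lm i (int a))) $$ (j, d) = M $$ (j, d + (if i = 1 then 0 else 1))"
    if d: "d < a + 1" for d
  proof -
    have "(M * transpose_mat (Lm i (int a))) $$ (j, d)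
        = (transpose_mat (Lm i (int a) * transpose_mat M)) $$ (j, d)"
      using M Lm_carrier[of i a] by (simp add: transpose_mult)
    also have "\<dots> = M $$ (j, d + (if i = 1 then 0 else 1))"
      using Lm_mult[of "transpose_mat M" a r i] M i j d by simp
    finally show ?thesis .
  qed
  have Nm: "Nm i (a + 1) \<in> carrier_mat (a + 1) (a + 1)" by (simp add: Nm_def)
  have "(M * transpose_mat (Lm i (int a)) * Nm i (a + 1)) $$ (j, l)
      = (\<Sum>d<a + 1. (M * transpose_mat (Lm i (int a))) $$ (j, d) * Nm i (a + 1) $$ (d, l))"
    using index_mult_mat_sum[OF MLt Nm j l] .
  also have "\<dots> = (M * transpose_mat (Lm i (int a))) $$ (j, l) * Nm i (a + 1) $$ (l, l)"
    using l by (simp add: Nm_def if_distrib[of "\<lambda>x. _ * x"] sum.delta' cong: if_cong)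
  finally show ?thesis using l i by (auto simp: MLt_index Nm_def)
qed

lemma Km_mult_index:
  assumes M: "M \<in> carrier_mat (n + 1) q" and j: "j < q" and b: "b + 3 \<le> n" and i: "i \<in> {1, 2}"
  shows "(Km a40 a22 a04 i n * M) $$ (b + (if i = 1 then 0 else 3), j)
    = (if i = 1 then 4 * a40 * M $$ (b, j) + 2 * a22 * M $$ (b + 2, j)
       else 4 * a04 * M $$ (b + 3, j) + 2 * a22 * M $$ (b + 1, j))"
proof -
  have K: "Km a40 a22 a04 i n \<in> carrier_mat (n + 1) (n + 1)" by (simp add: Km_def)
  have "(Km a40 a22 a04 i n * M) $$ (b + (if i = 1 then 0 else 3), j)
      = (\<Sum>e<n + 1. Km a40 a22 a04 i n $$ (b + (if i = 1 then 0 else 3), e) * M $$ (e, j))"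
    using b by (intro index_mult_mat_sum[OF K M _ j]) auto
  also have "\<dots> = (if i = 1
      then (\<Sum>e<n + 1. (if e = b then 4 * a40 else if e = b + 2 then 2 * a22 else 0) * M $$ (e, j))
      else (\<Sum>e<n + 1. (if e = b + 3 then 4 * a04 else if e = b + 1 then 2 * a22 else 0) * M $$ (e, j)))"
    using b by (auto simp: Km_def intro!: sum.cong)
  also have "\<dots> = (if i = 1 then 4 * a40 * M $$ (b, j) + 2 * a22 * M $$ (b + 2, j)
       else 4 * a04 * M $$ (b + 3, j) + 2 * a22 * M $$ (b + 1, j))"
    using sum_two_deltas[of b "n + 1" "b + 2" "4 * a40" "2 * a22" "\<lambda>e. M $$ (e, j)"]
      sum_two_deltas[of "b + 3" "n + 1" "b + 1" "4 * a04" "2 * a22" "\<lambda>e. M $$ (e, j)"] b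
    by simp
  finally show ?thesis .
qed

lemma Gz_carrier:
  assumes "\<And>n k. k \<le> n \<Longrightarrow> G n k \<in> carrier_mat (n + 1) (k + 1)"
  shows "Gz G a b \<in> carrier_mat (nat (a + 1)) (nat (b + 1))"
  using assms[of "nat b" "nat a"] by (auto simp: Gz_def nat_add_distrib)

lemma Gz_in: "0 \<le> b \<Longrightarrow> b \<le> a \<Longrightarrow> Gz G a b = G (nat a) (nat b)"
  by (simp add: Gz_def)

lemma Gz_out: "\<not> (0 \<le> b \<and> b \<le> a) \<Longrightarrow> Gz G a b = 0\<^sub>m (nat (a + 1)) (nat (b + 1))"
  unfolding Gz_def by auto

section \<open>Coefficient matrices of polynomial relations\<close>

lemma Pz_eq_vec: "Pz G a x y = vec (nat (a + 1)) (\<lambda>c. Pent G (nat a) c x y)"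
proof (cases "a < 0")
  case True
  then show ?thesis by (simp add: Pz_def) (rule eq_vecI; simp)
next
  case False
  then have "nat (a + 1) = nat a + 1" by simp
  then show ?thesis using False by (simp add: Pz_def)
qed

lemma Pent_eq_bipoly_Gz:
  assumes "n \<le> N" "j \<le> n"
  shows "Pent G n j = bipoly N (\<lambda>k l. Gz G (int n) (int k) $$ (j, l))"
proof -
  have "Pent G n j = bipoly N (\<lambda>k l. if k \<le> n then G n k $$ (j, l) else 0)"
    unfolding Pent_eq_bipoly bipoly_extend[OF \<open>n \<le> N\<close>] ..
  also have "\<dots> = bipoly N (\<lambda>k l. Gz G (int n) (int k) $$ (j, l))"
    using \<open>j \<le> n\<close> by (intro bipoly_cong) (simp add: Gz_def)
  finally show ?thesis .
qed

lemma relation_coeff_mat: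
  fixes G :: "nat \<Rightarrow> nat \<Rightarrow> real mat" and M1 M2 :: "real mat" and a1 a2 :: int
  assumes G_dim: "\<And>n k. k \<le> n \<Longrightarrow> G n k \<in> carrier_mat (n + 1) (k + 1)"
    and M1: "M1 \<in> carrier_mat r (nat (a1 + 1))" and M2: "M2 \<in> carrier_mat r (nat (a2 + 1))"
    and deg: "a1 \<le> int N" "a2 \<le> int N" "m \<le> N"
    and rel: "\<And>x y. vec r (\<lambda>j. bipoly N (q j) x y) = M1 *\<^sub>v Pz G a1 x y + M2 *\<^sub>v Pz G a2 x y"
  shows "M1 * Gz G a1 (int m) + M2 * Gz G a2 (int m) = mat r (m + 1) (\<lambda>(j, l). q j m l)"
proof -
  have Gz: "Gz G a (int m) \<in> carrier_mat (nat (a + 1)) (m + 1)" for a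
    using Gz_carrier[OF G_dim, of a "int m"] by (simp add: nat_add_distrib)
  \<comment> \<open>Row \<open>c\<close> of \<open>G\<^sup>a\<^sub>k\<close> lists the degree-\<open>k\<close> coefficients of \<open>P\<^sub>a\<^sub>,\<^sub>c\<close>.\<close>
  have Pent_a: "Pent G (nat a) c = bipoly N (\<lambda>k l. Gz G a (int k) $$ (c, l))"
    if "c < nat (a + 1)" "a \<le> int N" for a c
  proof -
    have "0 \<le> a" using that(1) by simp
    then show ?thesis using Pent_eq_bipoly_Gz[of "nat a" N c G] that by simp
  qed
  have "M1 * Gz G a1 (int m) + M2 * Gz G a2 (int m) \<in> carrier_mat r (m + 1)"
    using M1 M2 Gz by auto
  moreover have "(M1 * Gz G a1 (int m) + M2 * Gz G a2 (int m)) $$ (j, l) = q j m l"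
    if j: "j < r" and l: "l < m + 1" for j l
  proof -
    let ?coeff = "\<lambda>k l. (\<Sum>c<nat (a1 + 1). M1 $$ (j, c) * Gz G a1 (int k) $$ (c, l))
                        + (\<Sum>c<nat (a2 + 1). M2 $$ (j, c) * Gz G a2 (int k) $$ (c, l))"
    have "bipoly N (q j) x y = bipoly N ?coeff x y" for x y
    proof -
      have "bipoly N (q j) x y = (M1 *\<^sub>v Pz G a1 x y + M2 *\<^sub>v Pz G a2 x y) $ j"
        using arg_cong[OF rel[of x y], of "\<lambda>v. v $ j"] j by simp
      also have "\<dots> = (\<Sum>c<nat (a1 + 1). M1 $$ (j, c) * Pent G (nat a1) c x y)
          + (\<Sum>c<nat (a2 + 1). M2 $$ (j, c) * Pent G (nat a2) c x y)"
        using M1 M2 j index_mult_mat_vec_sum[OF M1 j] index_mult_mat_vec_sum[OF M2 j]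
        by (simp add: Pz_eq_vec del: index_mult_mat_vec)
      also have "\<dots> = bipoly N ?coeff x y"
        using deg by (simp add: bipoly_add bipoly_sum Pent_a)
      finally show ?thesis .
    qed
    then have coeff: "q j m l = ?coeff m l"
      by (rule bipoly_coeff_unique) (use deg l in auto)
    have "(M1 * Gz G a1 (int m) + M2 * Gz G a2 (int m)) $$ (j, l)
        = (M1 * Gz G a1 (int m)) $$ (j, l) + (M2 * Gz G a2 (int m)) $$ (j, l)"
      using M2 Gz[of a2] j l by (intro index_add_mat(1)) auto
    then show ?thesis
      unfolding coeff index_mult_mat_sum[OF M1 Gz j l] index_mult_mat_sum[OF M2 Gz j l] .
  qed
  ultimately show ?thesis by (intro eq_matI) auto
qed

lemma three_term_coeff_mat:
  fixes G :: "nat \<Rightarrow> nat \<Rightarrow> real mat" and A A' :: "real mat"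
  assumes G_dim: "\<And>n k. k \<le> n \<Longrightarrow> G n k \<in> carrier_mat (n + 1) (k + 1)"
    and A: "A \<in> carrier_mat (n + 1) (n + 2)" and A': "A' \<in> carrier_mat n (n + 1)"
    and rel: "\<And>x y. coord i x y \<cdot>\<^sub>v Pz G (int n) x y
                = A *\<^sub>v Pz G (int n + 1) x y + transpose_mat A' *\<^sub>v Pz G (int n - 1) x y"
    and i: "i \<in> {1, 2}" and m: "m \<le> n"
  shows "A * Gz G (int n + 1) (int m + 1) + transpose_mat A' * Gz G (int n - 1) (int m + 1)
           = Gz G (int n) (int m) * Lm i (int m)"
proof -
  let ?q = "\<lambda>j. coord_mult_coeff i (\<lambda>k l. Gz G (int n) (int k) $$ (j, l))"
  have rel': "vec (n + 1) (\<lambda>j. bipoly (n + 1) (?q j) x y)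
      = A *\<^sub>v Pz G (int n + 1) x y + transpose_mat A' *\<^sub>v Pz G (int n - 1) x y" for x y
    unfolding rel[symmetric]
    by (rule eq_vecI) (simp_all add: Pz_eq_vec Pent_eq_bipoly_Gz[of n n] coord_mult_bipoly)
  have Gz: "Gz G (int n) (int m) \<in> carrier_mat (n + 1) (m + 1)"
    using Gz_carrier[OF G_dim, of "int n" "int m"] by (simp add: nat_add_distrib)
  have "A * Gz G (int n + 1) (int (m + 1)) + transpose_mat A' * Gz G (int n - 1) (int (m + 1))
      = mat (n + 1) (m + 1 + 1) (\<lambda>(j, l). ?q j (m + 1) l)"
    by (rule relation_coeff_mat[OF G_dim _ _ _ _ _ rel'])
      (use A A' m in \<open>simp_all add: nat_add_distrib\<close>)
  also have "\<dots> = Gz G (int n) (int m) * Lm i (int m)"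
  proof (rule eq_matI)
    fix j l assume "j < dim_row (Gz G (int n) (int m) * Lm i (int m))"
      and "l < dim_col (Gz G (int n) (int m) * Lm i (int m))"
    then have j: "j < n + 1" and l: "l < m + 2" using Gz Lm_carrier[of i m] by auto
    show "mat (n + 1) (m + 1 + 1) (\<lambda>(j, l). ?q j (m + 1) l) $$ (j, l)
        = (Gz G (int n) (int m) * Lm i (int m)) $$ (j, l)"
      using j l i by (auto simp: mult_Lm_index[OF Gz] coord_mult_coeff_def)
  qed (use Gz Lm_carrier[of i m] in auto)
  finally show ?thesis by (simp add: ac_simps)
qed

lemma structure_coeff_mat:
  fixes G :: "nat \<Rightarrow> nat \<Rightarrow> real mat" and B C :: "real mat"
  assumes G_dim: "\<And>n k. k \<le> n \<Longrightarrow> G n k \<in> carrier_mat (n + 1) (k + 1)"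
    and B: "B \<in> carrier_mat (n + 1) n" and C: "C \<in> carrier_mat (n + 1) (n - 2)"
    and rel: "\<And>x y. vec (n + 1) (\<lambda>j. partial i (Pent G n j) x y)
                = B *\<^sub>v Pz G (int n - 1) x y + C *\<^sub>v Pz G (int n - 3) x y"
    and i: "i \<in> {1, 2}" and m: "m < n"
  shows "B * Gz G (int n - 1) (int m) + C * Gz G (int n - 3) (int m)
           = G n (m + 1) * transpose_mat (Lm i (int m)) * Nm i (m + 1)"
proof -
  let ?q = "\<lambda>j. partial_coeff i (\<lambda>k l. G n k $$ (j, l))"
  have rel': "vec (n + 1) (\<lambda>j. bipoly (n - 1) (?q j) x y)
      = B *\<^sub>v Pz G (int n - 1) x y + C *\<^sub>v Pz G (int n - 3) x y" for x y
    unfolding rel[symmetric] using m by (simp add: partial_Pent)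
  have "B * Gz G (int n - 1) (int m) + C * Gz G (int n - 3) (int m)
      = mat (n + 1) (m + 1) (\<lambda>(j, l). ?q j m l)"
  proof (rule relation_coeff_mat[OF G_dim _ _ _ _ _ rel'])
    have "nat (int n - 3 + 1) = n - 2" by arith
    then show "C \<in> carrier_mat (n + 1) (nat (int n - 3 + 1))" using C by simp
  qed (use B m in auto)
  also have "\<dots> = G n (m + 1) * transpose_mat (Lm i (int m)) * Nm i (m + 1)"
  proof (rule eq_matI)
    have G: "G n (m + 1) \<in> carrier_mat (n + 1) (m + 2)" using G_dim[of "m + 1" n] m by simp
    fix j l assume "j < dim_row (G n (m + 1) * transpose_mat (Lm i (int m)) * Nm i (m + 1))"
      and "l < dim_col (G n (m + 1) * transpose_mat (Lm i (int m)) * Nm i (m + 1))"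
    then have j: "j < n + 1" and l: "l < m + 1" using G by (auto simp: Nm_def)
    show "mat (n + 1) (m + 1) (\<lambda>(j, l). ?q j m l) $$ (j, l)
        = (G n (m + 1) * transpose_mat (Lm i (int m)) * Nm i (m + 1)) $$ (j, l)"
      using i j l by (subst mult_transpose_Lm_Nm_index[OF G j l i]) (auto simp: partial_coeff_def)
  qed (use G_dim[of "m + 1" n] m in \<open>auto simp: Nm_def\<close>)
  finally show ?thesis .
qed

section \<open>Orthonormal polynomials\<close>

locale polynomial_system =
  fixes G :: "nat \<Rightarrow> nat \<Rightarrow> real mat"
  assumes G_dim: "\<And>n k. k \<le> n \<Longrightarrow> G n k \<in> carrier_mat (n + 1) (k + 1)"
    and G_inv: "\<And>n. invertible_mat (G n n)"
begin

lemma G_carrier: "G n n \<in> carrier_mat (n + 1) (n + 1)"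
  by (rule G_dim) simp

end

locale orthonormal_polynomials = moment_weight W + polynomial_system G
  for W :: "real \<Rightarrow> real \<Rightarrow> real" and G :: "nat \<Rightarrow> nat \<Rightarrow> real mat" +
  assumes orthonormal: "\<And>n m j l. j \<le> n \<Longrightarrow> l \<le> m \<Longrightarrow>
         ip W (Pent G n j) (Pent G m l) = (if n = m \<and> j = l then 1 else 0)"
begin

lemma integrable_Pent_mult:
  "integrable lborel (\<lambda>(x, y). Pent G n j x y * Pent G m c x y * W x y)"
  unfolding Pent_eq_bipoly by (rule integrable_bipoly_mult)

lemma ip_Pent_combination:
  assumes f: "\<And>x y. f x y = (\<Sum>c'<n. w1 c' * Pent G (n - 1) c' x y)
                              + (\<Sum>c'<n - 2. w2 c' * Pent G (n - 3) c' x y)"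
    and n: "3 \<le> n" and c: "c \<le> n - 3"
  shows "ip W f (Pent G (n - 3) c) = w2 c"
proof -
  let ?S1 = "\<lambda>x y. \<Sum>c'<n. w1 c' * Pent G (n - 1) c' x y"
  let ?S2 = "\<lambda>x y. \<Sum>c'<n - 2. w2 c' * Pent G (n - 3) c' x y"
  have S1: "?S1 x y = bipoly (n - 1) (\<lambda>k l. \<Sum>c'<n. w1 c' * G (n - 1) k $$ (c', l)) x y"
    and S2: "?S2 x y = bipoly (n - 3) (\<lambda>k l. \<Sum>c'<n - 2. w2 c' * G (n - 3) k $$ (c', l)) x y"
    for x y by (simp_all add: Pent_eq_bipoly bipoly_sum)
  have "f = (\<lambda>x y. ?S1 x y + ?S2 x y)" using f by (simp add: fun_eq_iff)
  then have "ip W f (Pent G (n - 3) c) = ip W ?S1 (Pent G (n - 3) c) + ip W ?S2 (Pent G (n - 3) c)"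

      by (simp only:) (rule ip_add_left; unfold S1 S2; unfold Pent_eq_bipoly; rule integrable_bipoly_mult)
  also have "ip W ?S1 (Pent G (n - 3) c)
      = (\<Sum>c'<n. w1 c' * ip W (Pent G (n - 1) c') (Pent G (n - 3) c))"
    by (rule ip_sum_left) (simp_all add: integrable_Pent_mult)
  also have "\<dots> = 0"
  proof -
    have "n - 1 \<noteq> n - 3" using n by arith
    then show ?thesis using n c by (simp add: orthonormal)
  qed
  also have "ip W ?S2 (Pent G (n - 3) c)
      = (\<Sum>c'<n - 2. w2 c' * ip W (Pent G (n - 3) c') (Pent G (n - 3) c))"
    by (rule ip_sum_left) (simp_all add: integrable_Pent_mult)
  also have "\<dots> = w2 c"
    using n c by (simp add: orthonormal if_distrib[of "\<lambda>t. _ * t"] sum.delta' cong: if_cong)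
  finally show ?thesis by simp
qed

lemma G_mult_top_moments:
  assumes low: "\<And>p r. p + r < d \<Longrightarrow> ip W (Pent G n j) (monomial p r) = 0"
  shows "G d d *\<^sub>v vec (d + 1) (\<lambda>l. ip W (Pent G n j) (monomial (d - l) l))
           = vec (d + 1) (\<lambda>c. ip W (Pent G n j) (Pent G d c))"
proof (rule eq_vecI)
  fix c assume "c < dim_vec (vec (d + 1) (\<lambda>c. ip W (Pent G n j) (Pent G d c)))"
  then have c: "c < d + 1" by simp
  have "ip W (Pent G n j) (Pent G d c)
      = (\<Sum>k\<le>d. \<Sum>l\<le>k. G d k $$ (c, l) * ip W (Pent G n j) (monomial (k - l) l))"
    unfolding Pent_eq_bipoly[of G d c] Pent_eq_bipoly[of G n j] by (rule ip_bipoly_right)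
  also have "\<dots> = (\<Sum>l\<le>d. G d d $$ (c, l) * ip W (Pent G n j) (monomial (d - l) l))"
    by (rule sum_atMost_last) (simp add: low)
  also have "\<dots> = (G d d *\<^sub>v vec (d + 1) (\<lambda>l. ip W (Pent G n j) (monomial (d - l) l))) $ c"

      using index_mult_mat_vec_sum[OF G_carrier c]
      by (simp add: lessThan_Suc_atMost del: index_mult_mat_vec)
  finally show "(G d d *\<^sub>v vec (d + 1) (\<lambda>l. ip W (Pent G n j) (monomial (d - l) l))) $ c
      = vec (d + 1) (\<lambda>c. ip W (Pent G n j) (Pent G d c)) $ c"
    using c by simp
qed (use G_dim[of d d] in simp)

lemma ip_Pent_monomial_eq_0:
  assumes "p + r < n" "j \<le> n"
  shows "ip W (Pent G n j) (monomial p r) = 0"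
proof -
  \<comment> \<open>By induction on \<open>d\<close>: \<open>G\<^sub>d\<close> maps the degree-\<open>d\<close> moments of \<open>P\<^sub>n\<^sub>,\<^sub>j\<close> to the vanishing
      inner products with \<open>P\<^sub>d\<close>, and \<open>G\<^sub>d\<close> is invertible.\<close>
  have low: "\<forall>l\<le>d. ip W (Pent G n j) (monomial (d - l) l) = 0" if "d < n" for d
    using that
  proof (induction d rule: less_induct)
    case (less d)
    let ?\<phi> = "vec (d + 1) (\<lambda>l. ip W (Pent G n j) (monomial (d - l) l))"
    have "G d d *\<^sub>v ?\<phi> = vec (d + 1) (\<lambda>c. ip W (Pent G n j) (Pent G d c))"
    proof (rule G_mult_top_moments)
      fix p r assume "p + r < d"
      with less have "\<forall>l\<le>p + r. ip W (Pent G n j) (monomial (p + r - l) l) = 0" by simp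
      then show "ip W (Pent G n j) (monomial p r) = 0" by (metis add_diff_cancel_right' le_add2)
    qed
    also have "\<dots> = 0\<^sub>v (d + 1)" using less.prems assms(2) by (auto simp: orthonormal)
    finally have "?\<phi> = minv (G d d) *\<^sub>v 0\<^sub>v (d + 1)"
      using minv_mult_vec_cancel[OF G_inv G_carrier, of ?\<phi>] by simp
    also have "\<dots> = 0\<^sub>v (d + 1)"
      using minv_mat(1)[OF G_inv G_carrier, of d] by (intro eq_vecI) (auto simp: scalar_prod_def)
    finally have \<phi>: "?\<phi> = 0\<^sub>v (d + 1)" .
    show ?case
    proof (intro allI impI)
      fix l assume "l \<le> d"
      then show "ip W (Pent G n j) (monomial (d - l) l) = 0"
        using arg_cong[OF \<phi>, of "\<lambda>v. v $ l"] by simp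
    qed
  qed
  show ?thesis using low[OF assms(1), rule_format, of r] by simp
qed

lemma ip_Pent_monomial_top:
  assumes "p + r = n" "j \<le> n"
  shows "ip W (Pent G n j) (monomial p r) = minv (G n n) $$ (r, j)"
proof -
  let ?\<phi> = "vec (n + 1) (\<lambda>l. ip W (Pent G n j) (monomial (n - l) l))"
  have "G n n *\<^sub>v ?\<phi> = vec (n + 1) (\<lambda>c. ip W (Pent G n j) (Pent G n c))"
    by (rule G_mult_top_moments) (use assms(2) ip_Pent_monomial_eq_0 in auto)
  also have "\<dots> = unit_vec (n + 1) j" using assms(2) by (auto simp: orthonormal unit_vec_def)
  finally have "?\<phi> = minv (G n n) *\<^sub>v unit_vec (n + 1) j"
    using minv_mult_vec_cancel[OF G_inv G_carrier, of ?\<phi>] by simp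
  then have "?\<phi> $ r = (minv (G n n) *\<^sub>v unit_vec (n + 1) j) $ r" by simp
  moreover have "?\<phi> $ r = ip W (Pent G n j) (monomial (n - r) r)" using assms(1) by auto
  ultimately have "ip W (Pent G n j) (monomial (n - r) r) = (minv (G n n) *\<^sub>v unit_vec (n + 1) j) $ r"
    by simp
  also have "\<dots> = minv (G n n) $$ (r, j)"
    using minv_mat(1)[OF G_inv G_carrier[of n]] assms by simp
  finally show ?thesis by (simp add: assms(1)[symmetric])
qed

end

locale freud_orthonormal_polynomials =
  freud_weight a40 a22 a04 a20 a02 + orthonormal_polynomials "freud_W a40 a22 a04 a20 a02" G
  for a40 a22 a04 a20 a02 :: real and G :: "nat \<Rightarrow> nat \<Rightarrow> real mat"
begin

lemma ip_Pent_monomial_eq_moment_sum: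
  "ip W (Pent G n j) (monomial a b)
     = (\<Sum>(k, l)\<in>(SIGMA k:{..n}. {..k}). G n k $$ (j, l) * moment W (k - l + a) (l + b))"
  unfolding Pent_eq_bipoly bipoly_eq_monomial_sum
  by (subst ip_monomial_sum_monomial) (simp_all add: case_prod_beta)

lemma ip_pdx_Pent_monomial:
  "ip W (pdx (Pent G n j)) (monomial a b)
     = 4 * a40 * ip W (Pent G n j) (monomial (a + 3) b)
       + 2 * a22 * ip W (Pent G n j) (monomial (a + 1) (b + 2))
       + 2 * a20 * ip W (Pent G n j) (monomial (a + 1) b)
       - real a * ip W (Pent G n j) (monomial (a - 1) b)"
proof -
  let ?S = "SIGMA k:{..n}. {..k}"
  have "pdx (Pent G n j)
      = monomial_sum ?S (\<lambda>(k, l). G n k $$ (j, l) * real (k - l)) (\<lambda>(k, l). k - l - 1) snd"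
    unfolding Pent_eq_bipoly bipoly_eq_monomial_sum
    by (simp add: fun_eq_iff pdx_monomial_sum case_prod_beta')
  then have "ip W (pdx (Pent G n j)) (monomial a b)
      = (\<Sum>(k, l)\<in>?S. G n k $$ (j, l) * (real (k - l) * moment W (k - l - 1 + a) (l + b)))"
    by (simp add: ip_monomial_sum_monomial case_prod_beta mult.assoc)
  also have "\<dots> = (\<Sum>(k, l)\<in>?S. G n k $$ (j, l) * (4 * a40 * moment W (k - l + (a + 3)) (l + b)
      + 2 * a22 * moment W (k - l + (a + 1)) (l + (b + 2)) + 2 * a20 * moment W (k - l + (a + 1)) (l + b)
      - real a * moment W (k - l + (a - 1)) (l + b)))"
    by (simp only: moment_ibp_x_shifted)
  also have "\<dots> = 4 * a40 * ip W (Pent G n j) (monomial (a + 3) b)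
       + 2 * a22 * ip W (Pent G n j) (monomial (a + 1) (b + 2))
       + 2 * a20 * ip W (Pent G n j) (monomial (a + 1) b)
       - real a * ip W (Pent G n j) (monomial (a - 1) b)"
    unfolding ip_Pent_monomial_eq_moment_sum
    by (simp add: case_prod_beta sum_distrib_left sum.distrib sum_subtractf algebra_simps)
  finally show ?thesis .
qed

lemma ip_pdy_Pent_monomial:
  "ip W (pdy (Pent G n j)) (monomial a b)
     = 4 * a04 * ip W (Pent G n j) (monomial a (b + 3))
       + 2 * a22 * ip W (Pent G n j) (monomial (a + 2) (b + 1))
       + 2 * a02 * ip W (Pent G n j) (monomial a (b + 1))
       - real b * ip W (Pent G n j) (monomial a (b - 1))"
proof -
  let ?S = "SIGMA k:{..n}. {..k}"
  have "pdy (Pent G n j)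
      = monomial_sum ?S (\<lambda>(k, l). G n k $$ (j, l) * real l) (\<lambda>(k, l). k - l) (\<lambda>(k, l). l - 1)"
    unfolding Pent_eq_bipoly bipoly_eq_monomial_sum
    by (simp add: fun_eq_iff pdy_monomial_sum case_prod_beta')
  then have "ip W (pdy (Pent G n j)) (monomial a b)
      = (\<Sum>(k, l)\<in>?S. G n k $$ (j, l) * (real l * moment W (k - l + a) (l - 1 + b)))"
    by (simp add: ip_monomial_sum_monomial case_prod_beta mult.assoc)
  also have "\<dots> = (\<Sum>(k, l)\<in>?S. G n k $$ (j, l) * (4 * a04 * moment W (k - l + a) (l + (b + 3))
      + 2 * a22 * moment W (k - l + (a + 2)) (l + (b + 1)) + 2 * a02 * moment W (k - l + a) (l + (b + 1))
      - real b * moment W (k - l + a) (l + (b - 1))))"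
    by (simp only: moment_ibp_y_shifted)
  also have "\<dots> = 4 * a04 * ip W (Pent G n j) (monomial a (b + 3))
       + 2 * a22 * ip W (Pent G n j) (monomial (a + 2) (b + 1))
       + 2 * a02 * ip W (Pent G n j) (monomial a (b + 1))
       - real b * ip W (Pent G n j) (monomial a (b - 1))"
    unfolding ip_Pent_monomial_eq_moment_sum
    by (simp add: case_prod_beta sum_distrib_left sum.distrib sum_subtractf algebra_simps)
  finally show ?thesis .
qed

lemma ip_partial_Pent_monomial_eq_0:
  assumes "a + b + 3 < n" "j \<le> n"
  shows "ip W (partial i (Pent G n j)) (monomial a b) = 0"
  using assms
  by (simp add: partial_def ip_pdx_Pent_monomial ip_pdy_Pent_monomial ip_Pent_monomial_eq_0)

lemma ip_partial_Pent_monomial_top: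
  assumes "a + b + 3 = n" "j \<le> n"
  shows "ip W (partial i (Pent G n j)) (monomial a b)
    = (if i = 1 then 4 * a40 * minv (G n n) $$ (b, j) + 2 * a22 * minv (G n n) $$ (b + 2, j)
       else 4 * a04 * minv (G n n) $$ (b + 3, j) + 2 * a22 * minv (G n n) $$ (b + 1, j))"
  using assms by (simp add: partial_def ip_pdx_Pent_monomial ip_pdy_Pent_monomial
      ip_Pent_monomial_eq_0 ip_Pent_monomial_top)

lemma ip_partial_Pent_Pent:
  assumes j: "j \<le> k + 3"
  shows "ip W (partial i (Pent G (k + 3) j)) (Pent G k c)
    = (\<Sum>l\<le>k. G k k $$ (c, l) * ip W (partial i (Pent G (k + 3) j)) (monomial (k - l) l))"
proof -
  have "partial i (Pent G (k + 3) j) = bipoly (k + 2) (partial_coeff i (\<lambda>k' l. G (k + 3) k' $$ (j, l)))"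
    by (simp add: partial_Pent)
  then have "ip W (partial i (Pent G (k + 3) j)) (Pent G k c)
      = (\<Sum>k'\<le>k. \<Sum>l\<le>k'. G k k' $$ (c, l) * ip W (partial i (Pent G (k + 3) j)) (monomial (k' - l) l))"
    unfolding Pent_eq_bipoly[of G k c] by (simp only: ip_bipoly_right)
  also have "\<dots> = (\<Sum>l\<le>k. G k k $$ (c, l) * ip W (partial i (Pent G (k + 3) j)) (monomial (k - l) l))"
    using j by (intro sum_atMost_last) (simp add: ip_partial_Pent_monomial_eq_0)
  finally show ?thesis .
qed

end

section \<open>The matrices of the recurrence and structure relations\<close>

locale polynomial_recurrences = polynomial_system G
  for G :: "nat \<Rightarrow> nat \<Rightarrow> real mat" +
  fixes A B C :: "nat \<Rightarrow> nat \<Rightarrow> real mat" and i :: nat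
  assumes i: "i \<in> {1, 2}"
    and A_dim: "\<And>n. A i n \<in> carrier_mat (n + 1) (n + 2)"
    and three_term_relation: "\<And>n x y. coord i x y \<cdot>\<^sub>v Pz G (int n) x y
         = A i n *\<^sub>v Pz G (int n + 1) x y + transpose_mat (Az A i (int n - 1)) *\<^sub>v Pz G (int n - 1) x y"
    and B_dim: "\<And>n. 1 \<le> n \<Longrightarrow> B i n \<in> carrier_mat (n + 1) n"
    and C_dim: "\<And>n. 1 \<le> n \<Longrightarrow> C i n \<in> carrier_mat (n + 1) (n - 2)"
    and structure_relation: "\<And>n x y. 1 \<le> n \<Longrightarrow> vec (n + 1) (\<lambda>j. partial i (Pent G n j) x y)
         = B i n *\<^sub>v Pz G (int n - 1) x y + C i n *\<^sub>v Pz G (int n - 3) x y"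
begin

lemma Az_carrier: "Az A i (int n - 1) \<in> carrier_mat n (n + 1)"
  using A_dim[of "n - 1"] by (cases n) (simp_all add: Az_def)

lemma three_term_coeff:
  "m \<le> n \<Longrightarrow> A i n * Gz G (int n + 1) (int m + 1)
       + transpose_mat (Az A i (int n - 1)) * Gz G (int n - 1) (int m + 1)
     = Gz G (int n) (int m) * Lm i (int m)"
  by (rule three_term_coeff_mat[OF G_dim A_dim Az_carrier three_term_relation i])

lemma structure_coeff:
  "m < n \<Longrightarrow> B i n * Gz G (int n - 1) (int m) + C i n * Gz G (int n - 3) (int m)
     = G n (m + 1) * transpose_mat (Lm i (int m)) * Nm i (m + 1)"
  by (rule structure_coeff_mat[OF G_dim B_dim C_dim structure_relation i]) auto

lemma three_term_leading: "A i n * G (n + 1) (n + 1) = G n n * Lm i (int n)"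
proof -
  have "G (n + 1) (n + 1) \<in> carrier_mat (n + 2) (n + 2)" using G_carrier[of "n + 1"] by simp
  then have AG: "A i n * G (n + 1) (n + 1) \<in> carrier_mat (n + 1) (n + 2)"
    by (rule mult_carrier_mat[OF A_dim])
  have "A i n * Gz G (int n + 1) (int n + 1)
      + transpose_mat (Az A i (int n - 1)) * Gz G (int n - 1) (int n + 1)
      = Gz G (int n) (int n) * Lm i (int n)"
    by (rule three_term_coeff) simp
  moreover have "Gz G (int n + 1) (int n + 1) = G (n + 1) (n + 1)"
    by (simp add: Gz_in nat_add_distrib)
  moreover have "Gz G (int n - 1) (int n + 1) = 0\<^sub>m n (n + 2)" by (simp add: Gz_out nat_add_distrib)
  moreover have "Gz G (int n) (int n) = G n n" by (simp add: Gz_in)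
  moreover have "transpose_mat (Az A i (int n - 1)) * 0\<^sub>m n (n + 2) = 0\<^sub>m (n + 1) (n + 2)"
    using Az_carrier[of n] by (simp add: carrier_matD)
  ultimately show ?thesis using AG by simp
qed

lemma structure_leading:
  assumes "1 \<le> n"
  shows "B i n * G (n - 1) (n - 1) = G n n * transpose_mat (Lm i (int (n - 1))) * Nm i n"
proof -
  have BG: "B i n * G (n - 1) (n - 1) \<in> carrier_mat (n + 1) n"
    using B_dim[OF assms] G_carrier[of "n - 1"] assms by auto
  have "nat (int n - 3 + 1) = n - 2" by arith
  then have "Gz G (int n - 3) (int (n - 1)) = 0\<^sub>m (n - 2) n" using assms by (simp add: Gz_out)
  moreover have "B i n * Gz G (int n - 1) (int (n - 1)) + C i n * Gz G (int n - 3) (int (n - 1))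
      = G n (n - 1 + 1) * transpose_mat (Lm i (int (n - 1))) * Nm i (n - 1 + 1)"
    using assms by (intro structure_coeff) simp
  moreover have "Gz G (int n - 1) (int (n - 1)) = G (n - 1) (n - 1)"
    using assms by (simp add: Gz_in nat_diff_distrib)
  moreover have "C i n * 0\<^sub>m (n - 2) n = 0\<^sub>m (n + 1) n"
    using C_dim[OF assms] by (simp add: carrier_matD)
  ultimately show ?thesis using assms BG by simp
qed

lemma A_Gz_coeff:
  assumes "k \<le> n div 2"
  shows "A i n * Gz G (int n + 1) (int n - 2 * int k + 1)
           + transpose_mat (Az A i (int n - 1)) * Gz G (int n - 1) (int n - 2 * int k + 1)
         = Gz G (int n) (int n - 2 * int k) * Lm i (int n - 2 * int k)"
proof -
  have "2 * k \<le> n" using assms by presburger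
  then show ?thesis using three_term_coeff[of "n - 2 * k" n] by (simp add: of_nat_diff)
qed

lemma B_C_Gz_coeff:
  assumes n: "1 \<le> n" and k: "k \<le> n div 2"
  shows "B i n * Gz G (int n - 1) (int n - 2 * int k - 1)
           + C i n * Gz G (int n - 3) (int n - 2 * int k - 1)
         = Gz G (int n) (int n - 2 * int k) * transpose_mat (Lm i (int n - 2 * int k - 1))
           * Nm i (n - 2 * k)"
proof (cases "2 * k < n")
  case True
  define m where "m = n - 2 * k - 1"
  have "int n - 2 * int k - 1 = int m" "int n - 2 * int k = int m + 1" "n - 2 * k = m + 1" "m < n"
    using True by (auto simp: m_def)
  moreover have "Gz G (int n) (int m + 1) = G n (m + 1)"
    using \<open>m < n\<close> by (simp add: Gz_in nat_add_distrib)
  ultimately show ?thesis using structure_coeff[of m n] by simp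
next
  case False
  \<comment> \<open>For \<open>n = 2k\<close> both sides are matrices without columns.\<close>
  then have "int n - 2 * int k = 0" "n - 2 * k = 0" using k by auto
  then show ?thesis
    using B_dim[OF n] C_dim[OF n] Gz_carrier[OF G_dim, of "int n - 1" "- 1"]
      Gz_carrier[OF G_dim, of "int n - 3" "- 1"] Gz_carrier[OF G_dim, of "int n" 0]
    by (intro eq_matI) (simp_all add: Lm_def Nm_def)
qed

lemma B_eq_Ainv:
  assumes n: "1 \<le> n"
  shows "B i n = Ainv G i (n - 1) * G (n - 1) (n - 1) * Nm i n * minv (G (n - 1) (n - 1))"
proof -
  let ?G' = "G (n - 1) (n - 1)" and ?Lt = "transpose_mat (Lm i (int (n - 1)))"
  have G': "?G' \<in> carrier_mat n n" using G_carrier[of "n - 1"] n by simp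
  have GLt: "G n n * ?Lt \<in> carrier_mat (n + 1) n"
    using G_carrier[of n] Lm_carrier[of i "n - 1"] n by auto
  have "Ainv G i (n - 1) * ?G' = G n n * ?Lt"
    using minv_mult_cancel[OF G_inv G' GLt] n by (simp add: Ainv_def)
  then have "Ainv G i (n - 1) * ?G' * Nm i n * minv ?G' = B i n * ?G' * minv ?G'"
    using structure_leading[OF n] by simp
  also have "\<dots> = B i n" by (rule mult_minv_cancel[OF G_inv G' B_dim[OF n]])
  finally show ?thesis ..
qed

lemma structure_C_leading:
  "B i (k + 3) * G (k + 2) k + C i (k + 3) * G k k
     = G (k + 3) (k + 1) * (transpose_mat (Lm i (int k)) * Nm i (k + 1))"
proof -
  have X: "G (k + 3) (k + 1) \<in> carrier_mat (k + 4) (k + 2)"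
    using G_dim[of "k + 1" "k + 3"] by (simp add: eval_nat_numeral)
  have Lt: "transpose_mat (Lm i (int k)) \<in> carrier_mat (k + 2) (k + 1)"
    using Lm_carrier[of i k] by simp
  have N: "Nm i (k + 1) \<in> carrier_mat (k + 1) (k + 1)" by (simp add: Nm_def)
  have "B i (k + 3) * Gz G (int (k + 3) - 1) (int k) + C i (k + 3) * Gz G (int (k + 3) - 3) (int k)
      = G (k + 3) (k + 1) * transpose_mat (Lm i (int k)) * Nm i (k + 1)"
    by (rule structure_coeff) simp
  moreover have "Gz G (int (k + 3) - 1) (int k) = G (k + 2) k" "Gz G (int (k + 3) - 3) (int k) = G k k"
    by (simp_all add: Gz_in nat_add_distrib eval_nat_numeral)
  moreover have "G (k + 3) (k + 1) * transpose_mat (Lm i (int k)) * Nm i (k + 1)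
      = G (k + 3) (k + 1) * (transpose_mat (Lm i (int k)) * Nm i (k + 1))"
    by (rule assoc_mult_mat[OF X Lt N])
  ultimately show ?thesis by simp
qed

lemma C_eq:
  "C i (k + 3) = G (k + 3) (k + 1) * minv (G (k + 1) (k + 1)) * B i (k + 1)
                 - B i (k + 3) * G (k + 2) k * minv (G k k)"
proof -
  let ?X = "G (k + 3) (k + 1)" and ?Y = "G (k + 1) (k + 1)" and ?Z = "G k k" and ?G' = "G (k + 2) k"
    and ?LN = "transpose_mat (Lm i (int k)) * Nm i (k + 1)"
  have X: "?X \<in> carrier_mat (k + 4) (k + 2)"
    using G_dim[of "k + 1" "k + 3"] by (simp add: eval_nat_numeral)
  have Y: "?Y \<in> carrier_mat (k + 2) (k + 2)"
    using G_carrier[of "k + 1"] by (simp add: eval_nat_numeral)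
  have Z: "?Z \<in> carrier_mat (k + 1) (k + 1)" by (rule G_carrier)
  have G': "?G' \<in> carrier_mat (k + 3) (k + 1)"
    using G_dim[of k "k + 2"] by (simp add: eval_nat_numeral)
  have Bn: "B i (k + 3) \<in> carrier_mat (k + 4) (k + 3)"
    using B_dim[of "k + 3"] by (simp add: eval_nat_numeral)
  have Bp: "B i (k + 1) \<in> carrier_mat (k + 2) (k + 1)"
    using B_dim[of "k + 1"] by (simp add: eval_nat_numeral)
  have Cn: "C i (k + 3) \<in> carrier_mat (k + 4) (k + 1)"
    using C_dim[of "k + 3"] by (simp add: eval_nat_numeral)
  have LN: "?LN \<in> carrier_mat (k + 2) (k + 1)" using Lm_carrier[of i k] by (auto simp: Nm_def)
  have Yi: "minv ?Y \<in> carrier_mat (k + 2) (k + 2)" by (rule minv_mat(1)[OF G_inv Y])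
  have Zi: "minv ?Z \<in> carrier_mat (k + 1) (k + 1)" by (rule minv_mat(1)[OF G_inv Z])
  have Lt: "transpose_mat (Lm i (int k)) \<in> carrier_mat (k + 2) (k + 1)"
    using Lm_carrier[of i k] by simp
  have N: "Nm i (k + 1) \<in> carrier_mat (k + 1) (k + 1)" by (simp add: Nm_def)
  \<comment> \<open>Both \<open>C\<^sub>n\<^sub>,\<^sub>i G\<^sub>n\<^sub>-\<^sub>3\<close> (degree \<open>n - 3\<close> of the structure relation for \<open>n\<close>) and
      \<open>B\<^sub>n\<^sub>-\<^sub>2\<^sub>,\<^sub>i G\<^sub>n\<^sub>-\<^sub>3\<close> (leading degree for \<open>n - 2\<close>) involve \<open>L\<^sup>T\<^sub>n\<^sub>-\<^sub>3\<^sub>,\<^sub>i N\<^sub>n\<^sub>-\<^sub>2\<^sub>,\<^sub>i\<close>.\<close>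
  have "B i (k + 1) * ?Z = ?Y * transpose_mat (Lm i (int k)) * Nm i (k + 1)"
    using structure_leading[of "k + 1"] by simp
  also have "\<dots> = ?Y * ?LN" by (rule assoc_mult_mat[OF Y Lt N])
  finally have lead: "B i (k + 1) * ?Z = ?Y * ?LN" .
  have BG: "B i (k + 3) * ?G' \<in> carrier_mat (k + 4) (k + 1)" using Bn G' by simp
  have CZ: "C i (k + 3) * ?Z \<in> carrier_mat (k + 4) (k + 1)" using Cn Z by simp
  have "C i (k + 3) * ?Z = ?X * ?LN - B i (k + 3) * ?G'"
    by (rule add_eq_imp_eq_minus_mat[OF BG CZ structure_C_leading])
  also have "?X * ?LN = ?X * minv ?Y * B i (k + 1) * ?Z"
  proof -
    have XYi: "?X * minv ?Y \<in> carrier_mat (k + 4) (k + 2)" using X Yi by simp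
    have "?X * minv ?Y * B i (k + 1) * ?Z = ?X * minv ?Y * (?Y * ?LN)"
      unfolding assoc_mult_mat[OF XYi Bp Z] lead ..
    also have "\<dots> = ?X * minv ?Y * ?Y * ?LN"
      by (rule assoc_mult_mat[OF XYi Y LN, symmetric])
    also have "\<dots> = ?X * ?LN" using minv_mult_cancel[OF G_inv Y X] by simp
    finally show ?thesis ..
  qed
  also have "B i (k + 3) * ?G' = B i (k + 3) * ?G' * minv ?Z * ?Z"
    by (rule minv_mult_cancel[OF G_inv Z BG, symmetric])
  also have "?X * minv ?Y * B i (k + 1) * ?Z - B i (k + 3) * ?G' * minv ?Z * ?Z
      = (?X * minv ?Y * B i (k + 1) - B i (k + 3) * ?G' * minv ?Z) * ?Z"
    using X Yi Bp Bn G' Zi Z by (auto intro!: minus_mult_distrib_mat[symmetric])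
  finally have CZ_eq:
    "C i (k + 3) * ?Z = (?X * minv ?Y * B i (k + 1) - B i (k + 3) * ?G' * minv ?Z) * ?Z" .
  have "?X * minv ?Y * B i (k + 1) - B i (k + 3) * ?G' * minv ?Z \<in> carrier_mat (k + 4) (k + 1)"
    by (rule minus_carrier_mat[OF mult_carrier_mat[OF BG Zi]])
  from mult_right_cancel_invertible[OF G_inv Z Cn this CZ_eq] show ?thesis .
qed

lemma A_product_G:
  "A i k * A i (k + 1) * A i (k + 2) * G (k + 3) (k + 3)
     = G k k * Lm i (int k) * Lm i (int (k + 1)) * Lm i (int (k + 2))"
proof -
  have A3: "A i k \<in> carrier_mat (k + 1) (k + 2)" by (rule A_dim)
  have A2: "A i (k + 1) \<in> carrier_mat (k + 2) (k + 3)"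
    using A_dim[of "k + 1"] by (simp add: eval_nat_numeral)
  have A1: "A i (k + 2) \<in> carrier_mat (k + 3) (k + 4)"
    using A_dim[of "k + 2"] by (simp add: eval_nat_numeral)
  have A32: "A i k * A i (k + 1) \<in> carrier_mat (k + 1) (k + 3)" using A3 A2 by simp
  have G2: "G (k + 1) (k + 1) \<in> carrier_mat (k + 2) (k + 2)" using G_carrier[of "k + 1"] by simp
  have G1: "G (k + 2) (k + 2) \<in> carrier_mat (k + 3) (k + 3)"
    using G_carrier[of "k + 2"] by (simp add: eval_nat_numeral)
  have G0: "G (k + 3) (k + 3) \<in> carrier_mat (k + 4) (k + 4)"
    using G_carrier[of "k + 3"] by (simp add: eval_nat_numeral)
  have L2: "Lm i (int (k + 1)) \<in> carrier_mat (k + 2) (k + 3)"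
    using Lm_carrier[of i "k + 1"] by (simp add: eval_nat_numeral)
  have L1: "Lm i (int (k + 2)) \<in> carrier_mat (k + 3) (k + 4)"
    using Lm_carrier[of i "k + 2"] by (simp add: eval_nat_numeral)
  have AG: "A i m * G (m + 1) (m + 1) = G m m * Lm i (int m)" for m by (rule three_term_leading)
  have "A i k * A i (k + 1) * A i (k + 2) * G (k + 3) (k + 3)
      = A i k * A i (k + 1) * (A i (k + 2) * G (k + 3) (k + 3))"
    by (rule assoc_mult_mat[OF A32 A1 G0])
  also have "\<dots> = A i k * A i (k + 1) * (G (k + 2) (k + 2) * Lm i (int (k + 2)))"
    using AG[of "k + 2"] by (simp add: eval_nat_numeral)
  also have "\<dots> = A i k * (A i (k + 1) * G (k + 2) (k + 2)) * Lm i (int (k + 2))"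
    by (simp only: assoc_mult_mat[OF A32 G1 L1, symmetric] assoc_mult_mat[OF A3 A2 G1])
  also have "\<dots> = A i k * (G (k + 1) (k + 1) * Lm i (int (k + 1))) * Lm i (int (k + 2))"
    using AG[of "k + 1"] by (simp add: eval_nat_numeral)
  also have "\<dots> = A i k * G (k + 1) (k + 1) * Lm i (int (k + 1)) * Lm i (int (k + 2))"
    by (simp only: assoc_mult_mat[OF A3 G2 L2, symmetric])
  also have "\<dots> = G k k * Lm i (int k) * Lm i (int (k + 1)) * Lm i (int (k + 2))"
    using AG[of k] by simp
  finally show ?thesis .
qed

end

locale freud_recurrences =
  polynomial_recurrences G A B C i + freud_orthonormal_polynomials a40 a22 a04 a20 a02 G
  for a40 a22 a04 a20 a02 :: real and G A B C :: "nat \<Rightarrow> nat \<Rightarrow> real mat" and i :: nat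
begin

lemma C_entry_eq_ip:
  assumes j: "j \<le> k + 3" and c: "c \<le> k"
  shows "C i (k + 3) $$ (j, c) = ip W (partial i (Pent G (k + 3) j)) (Pent G k c)"
proof -
  have "partial i (Pent G (k + 3) j) x y = (\<Sum>c'<k + 3. B i (k + 3) $$ (j, c') * Pent G (k + 2) c' x y)
      + (\<Sum>c'<k + 1. C i (k + 3) $$ (j, c') * Pent G k c' x y)" for x y
  proof -
    have B: "B i (k + 3) \<in> carrier_mat (k + 4) (k + 3)"
      using B_dim[of "k + 3"] by (simp add: eval_nat_numeral)
    have C: "C i (k + 3) \<in> carrier_mat (k + 4) (k + 1)"
      using C_dim[of "k + 3"] by (simp add: eval_nat_numeral)
    have "partial i (Pent G (k + 3) j) x y
        = (B i (k + 3) *\<^sub>v Pz G (int (k + 3) - 1) x y + C i (k + 3) *\<^sub>v Pz G (int (k + 3) - 3) x y) $ j"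
      using arg_cong[OF structure_relation[of "k + 3" x y], of "\<lambda>v. v $ j"] j by simp
    also have "\<dots> = (\<Sum>c'<k + 3. B i (k + 3) $$ (j, c') * Pent G (k + 2) c' x y)
        + (\<Sum>c'<k + 1. C i (k + 3) $$ (j, c') * Pent G k c' x y)"
      using B C j index_mult_mat_vec_sum[OF B, of j] index_mult_mat_vec_sum[OF C, of j]
      by (simp add: Pz_eq_vec nat_add_distrib eval_nat_numeral del: index_mult_mat_vec)
    finally show ?thesis .
  qed
  then show ?thesis
    using ip_Pent_combination[where f = "partial i (Pent G (k + 3) j)" and n = "k + 3"] c by simp
qed

lemma C_transpose_eq_G_mult:
  "transpose_mat (C i (k + 3)) = G k k * mat (k + 1) (k + 4)
     (\<lambda>(b, j). (Km a40 a22 a04 i (k + 3) * minv (G (k + 3) (k + 3)))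
                 $$ (b + (if i = 1 then 0 else 3), j))"
  (is "_ = G k k * ?D")
proof -
  let ?K = "Km a40 a22 a04 i (k + 3)" and ?Gi = "minv (G (k + 3) (k + 3))"
  have Gi: "?Gi \<in> carrier_mat (k + 3 + 1) (k + 3 + 1)" by (rule minv_mat(1)[OF G_inv G_carrier])
  have G3: "G k k \<in> carrier_mat (k + 1) (k + 1)" by (rule G_carrier)
  have C: "C i (k + 3) \<in> carrier_mat (k + 4) (k + 1)"
    using C_dim[of "k + 3"] by (simp add: eval_nat_numeral)
  have D: "?D \<in> carrier_mat (k + 1) (k + 4)" by simp
  show ?thesis
  proof (rule eq_matI)
    fix c j assume "c < dim_row (G k k * ?D)" and "j < dim_col (G k k * ?D)"
    then have c: "c < k + 1" and j: "j < k + 4" using G3 by auto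
    then have j': "j \<le> k + 3" by simp
    \<comment> \<open>Orthonormality turns the entries of \<open>C\<^sub>n\<^sub>,\<^sub>i\<close> into inner products, which
        integration by parts evaluates.\<close>
    have "transpose_mat (C i (k + 3)) $$ (c, j) = ip W (partial i (Pent G (k + 3) j)) (Pent G k c)"
      using C c j by (simp add: C_entry_eq_ip)
    also have "\<dots> = (\<Sum>l\<le>k. G k k $$ (c, l) * (?K * ?Gi) $$ (l + (if i = 1 then 0 else 3), j))"
      unfolding ip_partial_Pent_Pent[OF j']
    proof (intro sum.cong refl arg_cong[where f = "\<lambda>t. _ * t"])
      fix l assume "l \<in> {..k}"
      then have l: "l + 3 \<le> k + 3" "k - l + l + 3 = k + 3" by auto
      show "ip W (partial i (Pent G (k + 3) j)) (monomial (k - l) l)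
          = (?K * ?Gi) $$ (l + (if i = 1 then 0 else 3), j)"
        using ip_partial_Pent_monomial_top[OF l(2), of j i] Km_mult_index[OF Gi _ l(1) i, of j] j
        by simp
    qed
    also have "\<dots> = (G k k * ?D) $$ (c, j)"
      using index_mult_mat_sum[OF G3 D c j] j by (simp add: lessThan_Suc_atMost)
    finally show "transpose_mat (C i (k + 3)) $$ (c, j) = (G k k * ?D) $$ (c, j)" .
  qed (use C G3 in auto)
qed

lemma C_transpose_eq:
  "transpose_mat (C i (k + 3))
     = A i k * A i (k + 1) * A i (k + 2) * G (k + 3) (k + 3) * Km a40 a22 a04 i (k + 3)
       * minv (G (k + 3) (k + 3))"
proof -
  let ?K = "Km a40 a22 a04 i (k + 3)" and ?Gi = "minv (G (k + 3) (k + 3))" and ?G3 = "G k k"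
  let ?L3 = "Lm i (int k)" and ?L2 = "Lm i (int (k + 1))" and ?L1 = "Lm i (int (k + 2))"
  have K: "?K \<in> carrier_mat (k + 4) (k + 4)" by (simp add: Km_def add.commute)
  have Gi: "?Gi \<in> carrier_mat (k + 4) (k + 4)"
    using minv_mat(1)[OF G_inv G_carrier[of "k + 3"]] by (simp add: add.commute)
  have KGi: "?K * ?Gi \<in> carrier_mat (k + 4) (k + 4)" using K Gi by simp
  have G3: "?G3 \<in> carrier_mat (k + 1) (k + 1)" by (rule G_carrier)
  have L3: "?L3 \<in> carrier_mat (k + 1) (k + 2)" using Lm_carrier[of i k] by simp
  have L2: "?L2 \<in> carrier_mat (k + 2) (k + 3)"
    using Lm_carrier[of i "k + 1"] by (simp add: eval_nat_numeral)
  have L1: "?L1 \<in> carrier_mat (k + 3) (k + 4)"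
    using Lm_carrier[of i "k + 2"] by (simp add: eval_nat_numeral)
  have P1: "?L1 * (?K * ?Gi) \<in> carrier_mat (k + 3) (k + 4)" using L1 KGi by simp
  have P2: "?L2 * (?L1 * (?K * ?Gi)) \<in> carrier_mat (k + 2) (k + 4)" using L2 P1 by simp
  have GL3: "?G3 * ?L3 \<in> carrier_mat (k + 1) (k + 2)" using G3 L3 by simp
  have GL2: "?G3 * ?L3 * ?L2 \<in> carrier_mat (k + 1) (k + 3)" using GL3 L2 by simp
  have GL1: "?G3 * ?L3 * ?L2 * ?L1 \<in> carrier_mat (k + 1) (k + 4)" using GL2 L1 by simp
  have "transpose_mat (C i (k + 3)) = ?G3 * (?L3 * (?L2 * (?L1 * (?K * ?Gi))))"
    unfolding C_transpose_eq_G_mult Lm_product_mult[OF KGi i] ..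
  also have "\<dots> = ?G3 * ?L3 * ?L2 * ?L1 * ?K * ?Gi"
    by (simp only: assoc_mult_mat[OF G3 L3 P2, symmetric] assoc_mult_mat[OF GL3 L2 P1, symmetric]
        assoc_mult_mat[OF GL2 L1 KGi, symmetric] assoc_mult_mat[OF GL1 K Gi, symmetric])
  also have "\<dots> = A i k * A i (k + 1) * A i (k + 2) * G (k + 3) (k + 3) * ?K * ?Gi"
    by (simp only: A_product_G)
  finally show ?thesis .
qed

end

theorem proposition4p3:
  fixes a40 a22 a04 a20 a02 :: real
    and G :: "nat \<Rightarrow> nat \<Rightarrow> real mat"
    and A B C :: "nat \<Rightarrow> nat \<Rightarrow> real mat"
  assumes a40: "a40 \<ge> 0" and a22: "a22 \<ge> 0" and a04: "a04 \<ge> 0"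
    and pos1: "a40 + a22 > 0" and pos2: "a22 + a04 > 0"
    and integrable: "\<And>p r. integrable (lborel :: (real \<times> real) measure)
         (\<lambda>(x, y). x ^ p * y ^ r * freud_W a40 a22 a04 a20 a02 x y)"
    and G_dim: "\<And>n k. k \<le> n \<Longrightarrow> G n k \<in> carrier_mat (n + 1) (k + 1)"
    and G_inv: "\<And>n. invertible_mat (G n n)"
    and orthonormal: "\<And>n m j l. j \<le> n \<Longrightarrow> l \<le> m \<Longrightarrow>
         ip (freud_W a40 a22 a04 a20 a02) (Pent G n j) (Pent G m l)
           = (if n = m \<and> j = l then 1 else 0)"
    and A_dim: "\<And>i n. i \<in> {1, 2} \<Longrightarrow> A i n \<in> carrier_mat (n + 1) (n + 2)"
    and three_term_x: "\<And>n x y. x \<cdot>\<^sub>v Pz G (int n) x y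
         = A 1 n *\<^sub>v Pz G (int n + 1) x y + transpose_mat (Az A 1 (int n - 1)) *\<^sub>v Pz G (int n - 1) x y"
    and three_term_y: "\<And>n x y. y \<cdot>\<^sub>v Pz G (int n) x y
         = A 2 n *\<^sub>v Pz G (int n + 1) x y + transpose_mat (Az A 2 (int n - 1)) *\<^sub>v Pz G (int n - 1) x y"
    and B_dim: "\<And>i n. i \<in> {1, 2} \<Longrightarrow> n \<ge> 1 \<Longrightarrow> B i n \<in> carrier_mat (n + 1) n"
    and C_dim: "\<And>i n. i \<in> {1, 2} \<Longrightarrow> n \<ge> 1 \<Longrightarrow> C i n \<in> carrier_mat (n + 1) (n - 2)"
    and struct_x: "\<And>n x y. n \<ge> 1 \<Longrightarrow> vec (n + 1) (\<lambda>j. pdx (Pent G n j) x y)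
         = B 1 n *\<^sub>v Pz G (int n - 1) x y + C 1 n *\<^sub>v Pz G (int n - 3) x y"
    and struct_y: "\<And>n x y. n \<ge> 1 \<Longrightarrow> vec (n + 1) (\<lambda>j. pdy (Pent G n j) x y)
         = B 2 n *\<^sub>v Pz G (int n - 1) x y + C 2 n *\<^sub>v Pz G (int n - 3) x y"
    and i: "i \<in> {1, 2 :: nat}"
  shows "(\<forall>n\<ge>1. B i n = Ainv G i (n - 1) * G (n - 1) (n - 1) * Nm i n * minv (G (n - 1) (n - 1)))
    \<and> (\<forall>n\<ge>3. transpose_mat (C i n)
          = A i (n - 3) * A i (n - 2) * A i (n - 1) * G n n * Km a40 a22 a04 i n * minv (G n n))
    \<and> (\<forall>n\<ge>3. C i n = G n (n - 2) * minv (G (n - 2) (n - 2)) * B i (n - 2)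
                      - B i n * G (n - 1) (n - 3) * minv (G (n - 3) (n - 3)))
    \<and> (\<forall>n k. k \<le> n div 2 \<longrightarrow>
          A i n * Gz G (int n + 1) (int n - 2 * int k + 1)
          + transpose_mat (Az A i (int n - 1)) * Gz G (int n - 1) (int n - 2 * int k + 1)
          = Gz G (int n) (int n - 2 * int k) * Lm i (int n - 2 * int k))
    \<and> (\<forall>n k. n \<ge> 1 \<longrightarrow> k \<le> n div 2 \<longrightarrow>
          B i n * Gz G (int n - 1) (int n - 2 * int k - 1)
          + C i n * Gz G (int n - 3) (int n - 2 * int k - 1)
          = Gz G (int n) (int n - 2 * int k) * transpose_mat (Lm i (int n - 2 * int k - 1))
            * Nm i (n - 2 * k))"
proof -
  \<comment> \<open>The sign conditions on the coefficients only serve to make the moments finite,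
      which is assumed directly.\<close>
  interpret freud_recurrences a40 a22 a04 a20 a02 G A B C i
    by unfold_locales (use i integrable G_dim G_inv orthonormal A_dim B_dim C_dim three_term_x
        three_term_y struct_x struct_y in \<open>auto simp: monomial_def coord_def partial_def\<close>)
  have C_parts: "transpose_mat (C i n)
          = A i (n - 3) * A i (n - 2) * A i (n - 1) * G n n * Km a40 a22 a04 i n * minv (G n n)
      \<and> C i n = G n (n - 2) * minv (G (n - 2) (n - 2)) * B i (n - 2)
                  - B i n * G (n - 1) (n - 3) * minv (G (n - 3) (n - 3))" if "3 \<le> n" for n
  proof -
    have "n = (n - 3) + 3" using that by simp
    then obtain k where k: "n = k + 3" by blast
    then have "n - 3 = k" "n - 2 = k + 1" "n - 1 = k + 2" by simp_all
    then show ?thesis using C_transpose_eq[of k] C_eq[of k] by (simp only: k[symmetric])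
  qed
  show ?thesis
    by (intro conjI allI impI B_eq_Ainv C_parts[THEN conjunct1] C_parts[THEN conjunct2]
        A_Gz_coeff B_C_Gz_coeff)
qed

end
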